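(* Let $M \geq 3$, $T \geq 16$, and $0 < \varepsilon \leq \min\{\frac{1}{M}, \frac{1}{100}\}$. Let the tuning parameters of the $M$-stage adaptive Neyman allocation algorithm be $\beta_m = 6 \cdot 15^{-\frac{m}{M}}$ (and $\beta_M = 1$). Under these parameters the algorithm is feasible, i.e., $1 < \beta_1 T^{\frac{1}{M}} < \dots < \beta_{M-1} T^{\frac{M-1}{M}} < T$. Furthermore, let $(T(1), T(0))$ be the total numbers of treated and control subjects produced by the algorithm. If there exist constants $\kappa(1), \kappa(0) < \infty$ not depending on $T$ with $\kappa(w) = \mathrm{E}[(Y(w) - \mathrm{E}Y(w))^4]/\sigma^4(w)$ for $w \in \{0,1\}$, then there exists an event that happens with probability at least $1 - (M-1)(\kappa(1) + \kappa(0)) T^{-\varepsilon}$, conditional on which \begin{align*} \sup_{\sigma(1), \sigma(0)} \ \frac{V(T(1), T(0))}{V(T^*(1), T^*(0))} \leq 1 + 4 \cdot 15^{-\frac{1}{M}} T^{-\frac{M-1}{M} + \varepsilon}. \end{align*}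
   Context: There are $T$ subjects; each subject $t$ has potential outcomes $(Y_t(1), Y_t(0))$ drawn i.i.d. from a super-population distribution of $(Y(1), Y(0))$, with standard deviations $\sigma(1), \sigma(0) > 0$. For allocations with $T(1)$ treated and $T(0)$ control subjects ($T(1)+T(0)=T$), the proxy mean squared error is $V(T(1), T(0)) = \frac{\sigma^2(1)}{T(1)} + \frac{\sigma^2(0)}{T(0)}$. The Neyman (clairvoyant) allocation is $T^*(1) = \frac{\sigma(1)}{\sigma(1)+\sigma(0)}T$, $T^*(0) = \frac{\sigma(0)}{\sigma(1)+\sigma(0)}T$, with $V(T^*(1), T^*(0)) = \frac{1}{T}(\sigma(1)+\sigma(0))^2$. The $M$-stage adaptive Neyman allocation algorithm: stage $m$ ends once a cumulative total of $\beta_m T^{m/M}$ subjects has been enrolled ($\beta_M = 1$); each stage is a completely randomized experiment with prescribed numbers of treated/control subjects. Stage 1 assigns $\frac{\beta_1}{2}T^{1/M}$ subjects to each arm. After stage $m$ ($m \le M-1$), compute the sample variances $\widehat{\sigma}^2_m(1), \widehat{\sigma}^2_m(0)$ (unbiased, $1/(n-1)$ normalization) from all treated, resp. control, observations in stages $1,\dots,m$, and set $\widehat{p}_w = \frac{\widehat{\sigma}_m(w)}{\widehat{\sigma}_m(1)+\widehat{\sigma}_m(0)}T$. For $m \le M-2$: (i) if $\widehat{p}_0 < \frac{\beta_m}{2}T^{m/M}$, all remaining subjects are assigned to treatment; (ii) if $\frac{\beta_m}{2}T^{m/M} \le \widehat{p}_0 < \frac{\beta_{m+1}}{2}T^{(m+1)/M}$,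 stage $m+1$ assigns $\widehat{p}_0 - \frac{\beta_m}{2}T^{m/M}$ subjects to control and $\beta_{m+1}T^{(m+1)/M} - \widehat{p}_0 - \frac{\beta_m}{2}T^{m/M}$ to treatment, and all later subjects go to treatment; (iii) if both $\widehat{p}_0, \widehat{p}_1 \ge \frac{\beta_{m+1}}{2}T^{(m+1)/M}$, stage $m+1$ assigns $\frac{\beta_{m+1}}{2}T^{(m+1)/M} - \frac{\beta_m}{2}T^{m/M}$ to each arm and the procedure continues; (iv),(v) are the symmetric versions of (ii),(i) with the roles of treatment and control swapped. After stage $M-1$: if $\widehat{p}_0 < \frac{\beta_{M-1}}{2}T^{(M-1)/M}$, all of stage $M$ goes to treatment; if $\widehat{p}_1 < \frac{\beta_{M-1}}{2}T^{(M-1)/M}$, all of stage $M$ goes to control; otherwise stage $M$ assigns $\widehat{p}_w - \frac{\beta_{M-1}}{2}T^{(M-1)/M}$ subjects to arm $w$. *)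

theory Defs
  imports "HOL-Probability.Probability"
begin

definition pop_mean :: "'a measure \<Rightarrow> ('a \<Rightarrow> real) \<Rightarrow> real" where
  "pop_mean P X = integral\<^sup>L P X"

definition pop_var :: "'a measure \<Rightarrow> ('a \<Rightarrow> real) \<Rightarrow> real" where
  "pop_var P X = integral\<^sup>L P (\<lambda>x. (X x - pop_mean P X) ^ 2)"

definition pop_sd :: "'a measure \<Rightarrow> ('a \<Rightarrow> real) \<Rightarrow> real" where
  "pop_sd P X = sqrt (pop_var P X)"

definition kurt :: "'a measure \<Rightarrow> ('a \<Rightarrow> real) \<Rightarrow> real" where
  "kurt P X = integral\<^sup>L P (\<lambda>x. (X x - pop_mean P X) ^ 4) / (pop_sd P X) ^ 4"

definition proxyV :: "real \<Rightarrow> real \<Rightarrow> real \<Rightarrow> real \<Rightarrow> real" where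
  "proxyV s1 s0 t1 t0 = s1 ^ 2 / t1 + s0 ^ 2 / t0"

definition neymanV :: "real \<Rightarrow> real \<Rightarrow> real \<Rightarrow> real" where
  "neymanV s1 s0 T = (s1 + s0) ^ 2 / T"

definition sample_var :: "(nat \<Rightarrow> real) \<Rightarrow> nat \<Rightarrow> real" where
  "sample_var x n =
     (let mu = (\<Sum>i<n. x i) / real n in (\<Sum>i<n. (x i - mu) ^ 2) / (real n - 1))"

definition sample_sd :: "(nat \<Rightarrow> real) \<Rightarrow> nat \<Rightarrow> real" where
  "sample_sd x n = sqrt (sample_var x n)"

definition beta :: "nat \<Rightarrow> nat \<Rightarrow> real" where
  "beta M m = (if m = M then 1 else 6 * 15 powr (- (real m / real M)))"

text \<open>Cumulative number of subjects enrolled at the end of stage m: beta_m T^(m/M).\<close>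
definition stage_end :: "nat \<Rightarrow> nat \<Rightarrow> nat \<Rightarrow> real" where
  "stage_end M T m = beta M m * real T powr (real m / real M)"

text \<open>Number of subjects per arm after stage m when all stages 1..m were balanced:
  beta_m/2 T^(m/M).\<close>
definition half_end :: "nat \<Rightarrow> nat \<Rightarrow> nat \<Rightarrow> real" where
  "half_end M T m = stage_end M T m / 2"

text \<open>Number of observations available in an arm that holds (real-valued) count c:
  the observations with indices i such that i < c, i.e. ceiling c of them.\<close>
definition n_obs :: "real \<Rightarrow> nat" where
  "n_obs c = card {i::nat. real i < c}"

text \<open>
  alg M T Y1 Y0 m: the final totals (T(1), T(0)) of treated and control subjects,
  given that stages 1..m were balanced (so each arm holds half_end M T m subjects)
  and the decision after stage m is about to be taken.  Y1 i (resp. Y0 i) is the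
  outcome of the i-th treated (resp. control) subject in order of enrolment.
\<close>
function alg :: "nat \<Rightarrow> nat \<Rightarrow> (nat \<Rightarrow> real) \<Rightarrow> (nat \<Rightarrow> real) \<Rightarrow> nat \<Rightarrow> real \<times> real" where
  "alg M T Y1 Y0 m =
    (let a = half_end M T m;
         N = n_obs a;
         s1 = sample_sd Y1 N;
         s0 = sample_sd Y0 N;
         p1 = s1 / (s1 + s0) * real T;
         p0 = s0 / (s1 + s0) * real T
     in if M \<le> m + 1 then
          (if p0 < a then (real T - a, a)
           else if p1 < a then (a, real T - a)
           else (a + (p1 - a), a + (p0 - a)))
        else
          (let b = half_end M T (m + 1) in
           if p0 < a then (real T - a, a)
           else if p0 < b then (real T - p0, p0)
           else if p1 < a then (a, real T - a)
           else if p1 < b then (p1, real T - p1)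
           else alg M T Y1 Y0 (m + 1)))"
  by pat_completeness auto
termination
  by (relation "Wellfounded.measure (\<lambda>(M, T, Y1, Y0, m). M - m)") auto

definition adaptive_alloc :: "nat \<Rightarrow> nat \<Rightarrow> (nat \<Rightarrow> real) \<Rightarrow> (nat \<Rightarrow> real) \<Rightarrow> real \<times> real" where
  "adaptive_alloc M T Y1 Y0 = alg M T Y1 Y0 1"

end

theory Submission
  imports Defs
begin

(*
  Write L = (T/15) powr (1/M) and u = T powr eps.  Stage m ends with 3 L^m subjects per arm,
  L^M = T/15, and eps <= min (1/M) (1/100) gives u <= 27/25 L.

  Probabilistic part: the sample variance of n iid observations has mean squared error at most
  mu4/n (it splits into two uncorrelated sums), so by Chebyshev it is within relative error
  sqrt (u/n) of sigma^2 except with probability kappa/u.  A union bound over the M - 1 stage ends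
  and both arms leaves an event of probability at least 1 - (M - 1)(kappa(1) + kappa(0)) / u on
  which all these estimates are accurate.

  Deterministic part: giving a of the T subjects to control loses the factor
  1 + (s1/(s1+s0))^2 a/(T-a) (1-c)^2 against Neyman's allocation, where c measures the
  mismatch between the Neyman odds and the odds used.  Accurate estimates after stage m give
  (1-c)^2 <= u/L^m for the plug-in allocation.  Whenever the algorithm stops at stage m, either
  the plug-in allocation is below the next stage end 3 L^(m+1), or it is clipped at 3 L^m and then
  c is bracketed between the estimates of stages m-1 and m, or m = M-1 and the AM-GM form
  (1-c)^2/(4c) of the loss applies.  In each case the loss is at most 4 u L / T, which is the
  claimed bound.
*)

section \<open>Stage sizes\<close>

definition stage_ratio :: "nat \<Rightarrow> nat \<Rightarrow> real" where
  "stage_ratio M T = (real T / 15) powr (1 / real M)"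

lemma stage_ratio_gt_one: "15 < T \<Longrightarrow> 0 < M \<Longrightarrow> 1 < stage_ratio M T"
  by (simp add: stage_ratio_def gr_one_powr)

lemma stage_ratio_power:
  assumes "0 < T"
  shows "stage_ratio M T ^ m = (real T / 15) powr (real m / real M)"
proof -
  have "stage_ratio M T ^ m = stage_ratio M T powr real m"
    using assms by (simp add: stage_ratio_def powr_realpow)
  also have "\<dots> = (real T / 15) powr (real m / real M)"
    by (simp add: stage_ratio_def powr_powr)
  finally show ?thesis .
qed

lemma stage_ratio_power_M:
  assumes "0 < T" "0 < M"
  shows "stage_ratio M T ^ M = real T / 15"
proof -
  have "stage_ratio M T ^ M = (real T / 15) powr (real M / real M)"
    using assms(1) by (rule stage_ratio_power)
  also have "\<dots> = real T / 15" using assms by simp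
  finally show ?thesis .
qed

lemma stage_end_eq:
  assumes "0 < T" "m < M"
  shows "stage_end M T m = 6 * stage_ratio M T ^ m"
proof -
  have "stage_end M T m = 6 * 15 powr (- (real m / real M)) * real T powr (real m / real M)"
    using assms by (simp add: stage_end_def beta_def)
  also have "\<dots> = 6 * (real T powr (real m / real M) / 15 powr (real m / real M))"
    by (simp add: powr_minus divide_inverse)
  also have "\<dots> = 6 * (real T / 15) powr (real m / real M)"
    by (simp add: powr_divide)
  finally show ?thesis
    using assms by (simp add: stage_ratio_power)
qed

lemma half_end_eq: "0 < T \<Longrightarrow> m < M \<Longrightarrow> half_end M T m = 3 * stage_ratio M T ^ m"
  by (simp add: half_end_def stage_end_eq)

lemma stage_ratio_power_pred:
  assumes "0 < T" "0 < M"
  shows "stage_ratio M T ^ (M - 1) = real T / (15 * stage_ratio M T)"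
proof -
  have "stage_ratio M T * stage_ratio M T ^ (M - 1) = real T / 15"
    using assms stage_ratio_power_M[OF assms] by (simp flip: power_Suc)
  moreover have "0 < stage_ratio M T" using assms by (simp add: stage_ratio_def)
  ultimately show ?thesis by (simp add: field_simps)
qed

lemma stage_ends_feasible:
  assumes "3 \<le> M" "16 \<le> T"
  shows "1 < stage_end M T 1
    \<and> (\<forall>m. 1 \<le> m \<and> m + 1 \<le> M - 1 \<longrightarrow> stage_end M T m < stage_end M T (m + 1))
    \<and> stage_end M T (M - 1) < real T"
proof -
  define L where "L = stage_ratio M T"
  have "1 < L" using assms by (simp add: L_def stage_ratio_gt_one)
  have "stage_end M T (M - 1) = 6 * L ^ (M - 1)"
    using assms by (simp add: L_def stage_end_eq)
  also have "\<dots> = 6 * (real T / (15 * L))"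
    unfolding L_def using assms by (subst stage_ratio_power_pred) auto
  also have "\<dots> < real T" using \<open>1 < L\<close> assms by (simp add: field_simps)
  finally show ?thesis
    using assms \<open>1 < L\<close> by (auto simp: L_def stage_end_eq)
qed

lemma powr_le_stage_ratio:
  assumes "0 < M" "16 \<le> T" "\<epsilon> \<le> min (1 / real M) (1 / 100)"
  shows "real T powr \<epsilon> \<le> 27/25 * stage_ratio M T"
proof -
  have T: "0 < real T" using assms by simp
  have "ln 15 \<le> ln ((27/25) ^ 100 :: real)"
    by (simp add: power_divide le_divide_eq)
  then have ln15: "ln 15 \<le> 100 * ln (27/25 :: real)"
    by (simp add: ln_realpow)
  have lnT: "ln 15 \<le> ln (real T)" using assms by simp
  have "\<epsilon> * ln (real T) = \<epsilon> * (ln (real T) - ln 15) + \<epsilon> * ln 15"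
    by (simp add: algebra_simps)
  also have "\<dots> \<le> 1 / real M * (ln (real T) - ln 15) + 1 / 100 * ln 15"
  proof (rule add_mono)
    show "\<epsilon> * (ln (real T) - ln 15) \<le> 1 / real M * (ln (real T) - ln 15)"
      using assms lnT by (intro mult_right_mono) auto
    show "\<epsilon> * ln 15 \<le> 1 / 100 * ln 15"
      using assms by (intro mult_right_mono) auto
  qed
  also have "\<dots> \<le> ln (27/25) + (ln (real T) - ln 15) / real M"
    using ln15 by simp
  finally have key: "\<epsilon> * ln (real T) \<le> ln (27/25) + (ln (real T) - ln 15) / real M" .
  have "real T powr \<epsilon> = exp (\<epsilon> * ln (real T))"
    using T by (simp add: powr_def)
  also have "\<dots> \<le> exp (ln (27/25) + (ln (real T) - ln 15) / real M)"
    using key by simp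
  also have "\<dots> = exp (ln (27/25)) * exp ((ln (real T) - ln 15) / real M)"
    by (simp add: exp_add)
  also have "\<dots> = 27/25 * stage_ratio M T"
  proof -
    have "ln (real T / 15) = ln (real T) - ln 15" using T by (simp add: ln_div)
    then have "stage_ratio M T = exp ((ln (real T) - ln 15) / real M)"
      unfolding stage_ratio_def using T by (simp add: powr_def)
    moreover have "exp (ln (27/25::real)) = 27/25" by simp
    ultimately show ?thesis by simp
  qed
  finally show ?thesis .
qed

lemma stage_bound_eq:
  assumes "0 < T" "0 < M"
  shows "4 * real T powr \<epsilon> * stage_ratio M T / real T
           = 4 * 15 powr (- (1 / real M)) * real T powr (- ((real M - 1) / real M) + \<epsilon>)"
proof -
  have "- ((real M - 1) / real M) + \<epsilon> = 1 / real M - 1 + \<epsilon>"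
    using assms by (simp add: field_simps)
  then have "real T powr (- ((real M - 1) / real M) + \<epsilon>)
      = real T powr (1 / real M) / real T * real T powr \<epsilon>"
    using assms by (simp add: powr_add powr_diff)
  moreover have "stage_ratio M T = real T powr (1 / real M) / 15 powr (1 / real M)"
    by (simp add: stage_ratio_def powr_divide)
  moreover have "15 powr (- (1 / real M)) = 1 / 15 powr (1 / real M)"
    by (simp add: powr_minus divide_inverse)
  ultimately show ?thesis by simp
qed

lemma le_n_obs: "0 \<le> c \<Longrightarrow> c \<le> real (n_obs c)"
proof -
  assume "0 \<le> c"
  have "{i::nat. real i < c} = {..< nat \<lceil>c\<rceil>}"
  proof safe
    show "i < nat \<lceil>c\<rceil>" if "real i < c" for i
    proof -
      have "int i < \<lceil>c\<rceil>" using that by (simp add: less_ceiling_iff)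
      then show ?thesis by simp
    qed
    show "real i < c" if "i < nat \<lceil>c\<rceil>" for i
    proof -
      have "int i < \<lceil>c\<rceil>" using that by simp
      then show ?thesis by (simp add: less_ceiling_iff)
    qed
  qed
  then show ?thesis using \<open>0 \<le> c\<close> by (simp add: n_obs_def of_nat_ceiling)
qed

lemma three_le_n_obs_half_end:
  assumes "3 \<le> M" "16 \<le> T" "1 \<le> m" "m \<le> M - 1"
  shows "3 \<le> n_obs (half_end M T m)"
proof -
  have "1 < stage_ratio M T" using assms by (simp add: stage_ratio_gt_one)
  then have "1 < stage_ratio M T ^ m" using assms by (simp add: one_less_power)
  then have "3 < half_end M T m" using assms by (simp add: half_end_eq)
  then show ?thesis using le_n_obs[of "half_end M T m"] by linarith
qed

section \<open>Efficiency of a fixed allocation\<close>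

lemma neyman_ratio_excess:
  fixes s1 s0 T a :: real
  assumes "0 < s1" "0 < s0" "0 < a" "a < T"
  shows "proxyV s1 s0 (T - a) a / neymanV s1 s0 T
           = 1 + (s1 * a - s0 * (T - a))\<^sup>2 / (a * (T - a) * (s1 + s0)\<^sup>2)"
proof -
  have "(s1\<^sup>2 * a + s0\<^sup>2 * (T - a)) * T = (s1 + s0)\<^sup>2 * (a * (T - a)) + (s1 * a - s0 * (T - a))\<^sup>2"
    by (simp add: power2_eq_square algebra_simps)
  moreover have "proxyV s1 s0 (T - a) a / neymanV s1 s0 T
      = (s1\<^sup>2 * a + s0\<^sup>2 * (T - a)) * T / (a * (T - a) * (s1 + s0)\<^sup>2)"
    using assms unfolding proxyV_def neymanV_def by (simp add: field_simps)
  ultimately show ?thesis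
    using assms by (simp add: add_divide_distrib)
qed

(* Equals 1 exactly when putting a of the T subjects into arm 0 is Neyman's allocation
   for the standard deviations s1, s0. *)
definition odds_mismatch :: "real \<Rightarrow> real \<Rightarrow> real \<Rightarrow> real \<Rightarrow> real" where
  "odds_mismatch s1 s0 T a = s0 * (T - a) / (s1 * a)"

lemma neyman_ratio_excess_odds:
  fixes s1 s0 T a :: real
  defines "c \<equiv> odds_mismatch s1 s0 T a"
  assumes pos: "0 < s1" "0 < s0" "0 < a" "a < T"
  shows "proxyV s1 s0 (T - a) a / neymanV s1 s0 T
           = 1 + (s1 / (s1 + s0))\<^sup>2 * (a * (1 - c)\<^sup>2 / (T - a))"
proof -
  have "s1 * a - s0 * (T - a) = s1 * a * (1 - c)"
    using pos by (simp add: c_def odds_mismatch_def field_simps)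
  moreover have "(s1 * a * y)\<^sup>2 / (a * (T - a) * (s1 + s0)\<^sup>2) = (s1 / (s1 + s0))\<^sup>2 * (a * y\<^sup>2 / (T - a))"
    for y
    using pos by (simp add: power_mult_distrib power_divide field_simps)
      (simp add: power2_eq_square algebra_simps)
  ultimately show ?thesis
    using neyman_ratio_excess[OF pos] by simp
qed

lemma neyman_ratio_le_small_arm:
  fixes s1 s0 T a K :: real
  defines "c \<equiv> odds_mismatch s1 s0 T a"
  assumes pos: "0 < s1" "0 < s0" "0 < a" and small: "5 * a \<le> T"
    and bound: "a * (1 - c)\<^sup>2 \<le> 3 * K"
  shows "proxyV s1 s0 (T - a) a / neymanV s1 s0 T \<le> 1 + 4 * K / T"
proof -
  have nonneg: "0 \<le> a * (1 - c)\<^sup>2" using pos by simp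
  then have "0 \<le> K" using bound by linarith
  have "(s1 / (s1 + s0))\<^sup>2 * (a * (1 - c)\<^sup>2 / (T - a)) \<le> a * (1 - c)\<^sup>2 / (T - a)"
    using pos small nonneg by (intro mult_left_le_one_le) (simp_all add: power_le_one)
  also have "\<dots> \<le> 3 * K / (4 / 5 * T)"
    using pos small bound \<open>0 \<le> K\<close> by (intro frac_le) simp_all
  also have "\<dots> \<le> 4 * K / T"
    using pos small \<open>0 \<le> K\<close> by (simp add: field_simps)
  finally show ?thesis
    using neyman_ratio_excess_odds[of s1 s0 a T] pos small by (simp add: c_def odds_mismatch_def)
qed

lemma neyman_ratio_le_amgm:
  fixes s1 s0 T a B :: real
  defines "c \<equiv> odds_mismatch s1 s0 T a"
  assumes pos: "0 < s1" "0 < s0" "0 < a" "a < T"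
    and bound: "(1 - c)\<^sup>2 \<le> B" "(1 - 1 / c)\<^sup>2 \<le> B"
  shows "proxyV s1 s0 (T - a) a / neymanV s1 s0 T \<le> 1 + B / 4"
proof -
  have "0 < c" using pos by (simp add: c_def odds_mismatch_def)
  have "4 * (s1 * s0) \<le> (s1 + s0)\<^sup>2"
    using zero_le_power2[of "s1 - s0"] by (simp add: power2_eq_square algebra_simps)
  then have w: "s1 * s0 / (s1 + s0)\<^sup>2 \<le> 1 / 4"
    using pos by (simp add: field_simps)
  have odds: "a / (T - a) = s0 / (s1 * c)"
    using pos by (simp add: c_def odds_mismatch_def field_simps)
  have "(s1 / (s1 + s0))\<^sup>2 * (a * y / (T - a)) = s1 * s0 / (s1 + s0)\<^sup>2 * (y / c)" for y
  proof -
    have "(s1 / (s1 + s0))\<^sup>2 * (a * y / (T - a)) = (s1 / (s1 + s0))\<^sup>2 * (s0 / (s1 * c)) * y"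
      by (simp flip: odds)
    also have "\<dots> = s1 * s0 / (s1 + s0)\<^sup>2 * (y / c)"
      using pos \<open>0 < c\<close> by (simp add: power2_eq_square)
    finally show ?thesis .
  qed
  moreover have "(1 - c)\<^sup>2 / c \<le> B"
  proof (cases "1 \<le> c")
    case True
    then have "(1 - c)\<^sup>2 / c \<le> (1 - c)\<^sup>2" by (simp add: divide_le_eq mult_le_cancel_left1)
    then show ?thesis using bound by linarith
  next
    case False
    have "(1 - c)\<^sup>2 / c = c * (1 - 1 / c)\<^sup>2"
      using \<open>0 < c\<close> by (simp add: power2_eq_square field_simps)
    also have "\<dots> \<le> (1 - 1 / c)\<^sup>2" using False \<open>0 < c\<close> by (simp add: mult_left_le_one_le)
    finally show ?thesis using bound by linarith
  qed
  moreover have "s1 * s0 / (s1 + s0)\<^sup>2 * ((1 - c)\<^sup>2 / c) \<le> 1 / 4 * B"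
    using w \<open>(1 - c)\<^sup>2 / c \<le> B\<close> \<open>0 < c\<close> pos by (intro mult_mono) simp_all
  ultimately have "(s1 / (s1 + s0))\<^sup>2 * (a * (1 - c)\<^sup>2 / (T - a)) \<le> 1 / 4 * B"
    by simp
  then show ?thesis
    using neyman_ratio_excess_odds[of s1 s0 a T] pos by (simp add: c_def odds_mismatch_def)
qed

lemma proxyV_swap: "proxyV s1 s0 t1 t0 = proxyV s0 s1 t0 t1"
  and neymanV_swap: "neymanV s1 s0 T = neymanV s0 s1 T"
  by (simp_all add: proxyV_def neymanV_def add.commute)

lemma estimated_alloc_less_iff:
  fixes qA qB sA sB T a :: real
  assumes "0 < qA" "0 < qB" "0 < sA" "0 < sB" "0 < a" "a < T"
  shows "qB / (qA + qB) * T < a \<longleftrightarrow> odds_mismatch sA sB T a < qA * sB / (qB * sA)"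
proof -
  have "qB / (qA + qB) * T < a \<longleftrightarrow> (T - a) / a < qA / qB"
    using assms by (simp add: field_simps)
  also have "\<dots> \<longleftrightarrow> sB / sA * ((T - a) / a) < sB / sA * (qA / qB)"
    using assms by (simp only: mult_less_cancel_left_pos[of "sB / sA"] divide_pos_pos)
  also have "sB / sA * ((T - a) / a) = odds_mismatch sA sB T a"
    by (simp add: odds_mismatch_def)
  also have "sB / sA * (qA / qB) = qA * sB / (qB * sA)"
    by (simp only: times_divide_times_eq mult.commute)
  finally show ?thesis .
qed

lemma odds_mismatch_estimated_alloc:
  fixes qA qB sA sB T :: real
  assumes "0 < qA" "0 < qB" "0 < T"
  shows "odds_mismatch sA sB T (qB / (qA + qB) * T) = qA * sB / (qB * sA)"
proof -
  define k where "k = T / (qA + qB)"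
  have "0 < k" using assms by (simp add: k_def)
  have "qB / (qA + qB) * T = qB * k" "T - qB / (qA + qB) * T = qA * k"
    using assms by (simp_all add: k_def field_simps)
  then have "odds_mismatch sA sB T (qB / (qA + qB) * T) = (qA * sB) * k / ((qB * sA) * k)"
    by (simp add: odds_mismatch_def ac_simps)
  then show ?thesis using \<open>0 < k\<close> by simp
qed

lemma power2_one_minus_between_le:
  fixes lo c hi B :: real
  assumes "lo \<le> c" "c \<le> hi" "(1 - lo)\<^sup>2 \<le> B" "(1 - hi)\<^sup>2 \<le> B"
  shows "(1 - c)\<^sup>2 \<le> B"
proof (cases "c \<le> 1")
  case True
  then have "(1 - c)\<^sup>2 \<le> (1 - lo)\<^sup>2" using assms by (intro power_mono) auto
  then show ?thesis using assms by linarith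
next
  case False
  then have "(c - 1)\<^sup>2 \<le> (hi - 1)\<^sup>2" using assms by (intro power_mono) auto
  then show ?thesis using assms by (simp add: power2_commute)
qed

lemma neyman_ratio_le_clipped:
  fixes qA qB sA sB T a z B K :: real
  assumes pos: "0 < sA" "0 < sB" "0 < qA" "0 < qB" "0 < a" and small: "5 * a \<le> T"
    and below: "qB / (qA + qB) * T < a" and lower: "z \<le> odds_mismatch sA sB T a"
    and bounds: "(1 - z)\<^sup>2 \<le> B" "(1 - qA * sB / (qB * sA))\<^sup>2 \<le> B" and "a * B \<le> 3 * K"
  shows "proxyV sA sB (T - a) a / neymanV sA sB T \<le> 1 + 4 * K / T"
proof (rule neyman_ratio_le_small_arm[OF pos(1,2,5) small])
  have "odds_mismatch sA sB T a < qA * sB / (qB * sA)"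
    using below pos small estimated_alloc_less_iff[of qA qB sA sB a T] by simp
  then have "(1 - odds_mismatch sA sB T a)\<^sup>2 \<le> B"
    using power2_one_minus_between_le[OF lower _ bounds] by simp
  then have "a * (1 - odds_mismatch sA sB T a)\<^sup>2 \<le> a * B"
    using pos by (intro mult_left_mono) auto
  then show "a * (1 - odds_mismatch sA sB T a)\<^sup>2 \<le> 3 * K"
    using \<open>a * B \<le> 3 * K\<close> by linarith
qed

lemma neyman_ratio_le_estimated:
  fixes qA qB sA sB T b B K :: real
  defines "a \<equiv> qB / (qA + qB) * T"
  assumes pos: "0 < sA" "0 < sB" "0 < qA" "0 < qB" "0 < T"
    and below: "a < b" and small: "5 * b \<le> T"
    and error: "(1 - qA * sB / (qB * sA))\<^sup>2 \<le> B" and bound: "b * B \<le> 3 * K"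
  shows "proxyV sA sB (T - a) a / neymanV sA sB T \<le> 1 + 4 * K / T"
proof (rule neyman_ratio_le_small_arm)
  have "0 < a" using pos by (simp add: a_def)
  then have "a * (1 - qA * sB / (qB * sA))\<^sup>2 \<le> b * B"
    using below error by (intro mult_mono) simp_all
  then show "a * (1 - odds_mismatch sA sB T a)\<^sup>2 \<le> 3 * K"
    using bound pos odds_mismatch_estimated_alloc[of qA qB T sA sB] by (simp add: a_def)
qed (use pos below small in \<open>simp_all add: a_def\<close>)

section \<open>Relative error of estimated standard deviations\<close>

lemma abs_diff_le_if_power2_near_one:
  fixes x y d :: real
  assumes pos: "0 < x" "0 < y" and d: "0 \<le> d" "d \<le> 3/5"
    and near: "\<bar>x\<^sup>2 - 1\<bar> \<le> d" "\<bar>y\<^sup>2 - 1\<bar> \<le> d"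
  shows "\<bar>y - x\<bar> \<le> 5 * d / 3 * y"
proof -
  have d2: "25 * d\<^sup>2 \<le> 9"
    using power_mono[OF d(2) d(1), of 2] by (simp add: power2_eq_square)
  have upper: "x \<le> (1 + 5 * d / 3) * y"
  proof (rule power2_le_imp_le)
    have "(1 + 5 * d / 3)\<^sup>2 * (1 - d) - (1 + d) = d * (12 - 5 * d - 25 * d\<^sup>2) / 9"
      by (simp add: power2_eq_square field_simps)
    moreover have "0 \<le> d * (12 - 5 * d - 25 * d\<^sup>2) / 9" using d d2 by simp
    moreover have "(1 + 5 * d / 3)\<^sup>2 * (1 - d) \<le> (1 + 5 * d / 3)\<^sup>2 * y\<^sup>2"
      using near by (intro mult_left_mono) auto
    ultimately show "x\<^sup>2 \<le> ((1 + 5 * d / 3) * y)\<^sup>2"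
      using near by (simp add: power_mult_distrib)
  qed (use pos d in simp)
  have lower: "(1 - 5 * d / 3) * y \<le> x"
  proof (rule power2_le_imp_le)
    have "(1 - d) - (1 - 5 * d / 3)\<^sup>2 * (1 + d) = d * (12 + 5 * d - 25 * d\<^sup>2) / 9"
      by (simp add: power2_eq_square field_simps)
    moreover have "0 \<le> d * (12 + 5 * d - 25 * d\<^sup>2) / 9" using d d2 by simp
    moreover have "(1 - 5 * d / 3)\<^sup>2 * y\<^sup>2 \<le> (1 - 5 * d / 3)\<^sup>2 * (1 + d)"
      using near by (intro mult_left_mono) auto
    ultimately show "((1 - 5 * d / 3) * y)\<^sup>2 \<le> x\<^sup>2"
      using near by (simp add: power_mult_distrib)
  qed (use pos in simp)
  show ?thesis
    by (rule abs_leI) (use upper lower in \<open>simp add: algebra_simps\<close>)+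
qed

lemma power2_one_minus_divide_le:
  fixes x y d :: real
  assumes "0 < x" "0 < y" "0 \<le> d" "d \<le> 3/5" "\<bar>x\<^sup>2 - 1\<bar> \<le> d" "\<bar>y\<^sup>2 - 1\<bar> \<le> d"
  shows "(1 - x / y)\<^sup>2 \<le> 25/9 * d\<^sup>2"
proof -
  have "1 - x / y = (y - x) / y"
    using assms by (simp add: field_simps)
  then have "\<bar>1 - x / y\<bar> = \<bar>y - x\<bar> / y"
    using assms by (simp add: abs_divide)
  also have "\<dots> \<le> 5 * d / 3"
    using abs_diff_le_if_power2_near_one[OF assms] assms by (simp add: pos_divide_le_eq)
  finally show ?thesis
    using power_mono[of "\<bar>1 - x / y\<bar>" "5 * d / 3" 2] by (simp add: power2_eq_square)
qed

lemma sqrt_ratio_rel_error: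
  fixes v1 v0 s1 s0 \<delta> :: real
  assumes close: "\<bar>v1 - s1\<^sup>2\<bar> < \<delta> * s1\<^sup>2" "\<bar>v0 - s0\<^sup>2\<bar> < \<delta> * s0\<^sup>2"
    and pos: "0 < s1" "0 < s0" and \<delta>: "\<delta> \<le> 3/5"
  shows "0 < sqrt v1" "(1 - sqrt v1 * s0 / (sqrt v0 * s1))\<^sup>2 \<le> 25/9 * \<delta>\<^sup>2"
proof -
  have rel: "0 < v" "\<bar>(sqrt v / s)\<^sup>2 - 1\<bar> \<le> \<delta>" if "\<bar>v - s\<^sup>2\<bar> < \<delta> * s\<^sup>2" "0 < s" for v s
  proof -
    have "0 < s\<^sup>2" using that by simp
    moreover have "\<delta> * s\<^sup>2 \<le> 3/5 * s\<^sup>2" using \<delta> \<open>0 < s\<^sup>2\<close> by simp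
    ultimately show "0 < v" using that by linarith
    then have "(sqrt v / s)\<^sup>2 - 1 = (v - s\<^sup>2) / s\<^sup>2"
      using \<open>0 < s\<^sup>2\<close> by (simp add: power_divide field_simps)
    then show "\<bar>(sqrt v / s)\<^sup>2 - 1\<bar> \<le> \<delta>"
      using that \<open>0 < s\<^sup>2\<close> by (simp add: abs_divide divide_le_eq)
  qed
  note rel1 = rel[OF close(1) pos(1)] and rel0 = rel[OF close(2) pos(2)]
  show "0 < sqrt v1" using rel1 by simp
  have "0 \<le> \<delta> * s1\<^sup>2" using close(1) abs_ge_zero[of "v1 - s1\<^sup>2"] by linarith
  then have "0 \<le> \<delta>" using pos by (simp add: zero_le_mult_iff)
  have "sqrt v1 * s0 / (sqrt v0 * s1) = (sqrt v1 / s1) / (sqrt v0 / s0)"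
    by (simp add: field_simps)
  then show "(1 - sqrt v1 * s0 / (sqrt v0 * s1))\<^sup>2 \<le> 25/9 * \<delta>\<^sup>2"
    using rel1 rel0 pos by (simp only:) (intro power2_one_minus_divide_le[OF _ _ \<open>0 \<le> \<delta>\<close> \<delta>], simp_all)
qed

section \<open>The algorithm on accurate estimates\<close>

definition sample_var_accurate :: "(nat \<Rightarrow> real) \<Rightarrow> real \<Rightarrow> real \<Rightarrow> nat \<Rightarrow> bool" where
  "sample_var_accurate y \<sigma>2 u n \<longleftrightarrow> \<bar>sample_var y n - \<sigma>2\<bar> < sqrt (u / n) * \<sigma>2"

locale accurate_estimates =
  fixes M T :: nat and u s1 s0 :: real and y1 y0 :: "nat \<Rightarrow> real"
  assumes M_ge_3: "3 \<le> M" and T_ge_16: "16 \<le> T"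
    and u_ge_1: "1 \<le> u" and u_le: "u \<le> 27/25 * stage_ratio M T"
    and sd_pos: "0 < s1" "0 < s0"
    and accurate: "\<And>m. 1 \<le> m \<Longrightarrow> m \<le> M - 1 \<Longrightarrow>
        sample_var_accurate y1 (s1\<^sup>2) u (n_obs (half_end M T m)) \<and>
        sample_var_accurate y0 (s0\<^sup>2) u (n_obs (half_end M T m))"
begin

abbreviation L :: real where "L \<equiv> stage_ratio M T"
abbreviation arm :: "nat \<Rightarrow> real" where "arm m \<equiv> half_end M T m"
abbreviation est1 :: "nat \<Rightarrow> real" where "est1 m \<equiv> sample_sd y1 (n_obs (arm m))"
abbreviation est0 :: "nat \<Rightarrow> real" where "est0 m \<equiv> sample_sd y0 (n_obs (arm m))"
abbreviation alloc1 :: "nat \<Rightarrow> real" where "alloc1 m \<equiv> est1 m / (est1 m + est0 m) * real T"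
abbreviation alloc0 :: "nat \<Rightarrow> real" where "alloc0 m \<equiv> est0 m / (est1 m + est0 m) * real T"
abbreviation mse_ratio :: "real \<times> real \<Rightarrow> real" where
  "mse_ratio t \<equiv> proxyV s1 s0 (fst t) (snd t) / neymanV s1 s0 (real T)"

lemma L_gt_1: "1 < L"
  using M_ge_3 T_ge_16 by (simp add: stage_ratio_gt_one)

lemma arm_eq: "m < M \<Longrightarrow> arm m = 3 * L ^ m"
  using T_ge_16 by (simp add: half_end_eq)

lemma arm_pos: "m < M \<Longrightarrow> 0 < arm m"
  using L_gt_1 by (simp add: arm_eq)

lemma arm_small: "m \<le> M - 1 \<Longrightarrow> 5 * arm m \<le> real T"
proof -
  assume "m \<le> M - 1"
  then have "L ^ m \<le> L ^ (M - 1)" using L_gt_1 by (intro power_increasing) auto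
  also have "\<dots> = real T / (15 * L)"
    by (rule stage_ratio_power_pred) (use M_ge_3 T_ge_16 in auto)
  also have "\<dots> \<le> real T / 15" using L_gt_1 by (intro divide_left_mono) auto
  finally show ?thesis using \<open>m \<le> M - 1\<close> M_ge_3 by (simp add: arm_eq)
qed

lemma stage_precision:
  assumes "1 \<le> m" "m \<le> M - 1"
  defines "\<delta> \<equiv> sqrt (u / real (n_obs (arm m)))"
  shows "\<delta> \<le> 3/5" and "25/9 * \<delta>\<^sup>2 \<le> u / L ^ m"
proof -
  define N where "N = real (n_obs (arm m))"
  have "m < M" using assms M_ge_3 by linarith
  have "0 < L" using L_gt_1 by simp
  have "3 * L ^ m \<le> N"
    using le_n_obs arm_pos[OF \<open>m < M\<close>] by (simp add: N_def arm_eq[OF \<open>m < M\<close>])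
  moreover have "L \<le> L ^ m"
    using L_gt_1 assms by (metis less_imp_le power_increasing power_one_right)
  ultimately have "3 * L \<le> N" by linarith
  then have "0 < N" using \<open>0 < L\<close> by linarith
  have "u / N \<le> u / (3 * L)" using \<open>3 * L \<le> N\<close> \<open>0 < L\<close> u_ge_1 by (intro divide_left_mono) auto
  also have "\<dots> \<le> 9/25" using u_le \<open>0 < L\<close> by (simp add: field_simps)
  finally have "\<delta> \<le> sqrt (9/25)"
    unfolding \<delta>_def N_def[symmetric] by (rule real_sqrt_le_mono)
  also have "sqrt (9/25) = (3/5 :: real)"
    by (simp add: real_sqrt_divide)
  finally show "\<delta> \<le> 3/5" .
  have "25/9 * \<delta>\<^sup>2 = 25/9 * (u / N)" using u_ge_1 \<open>0 < N\<close> by (simp add: \<delta>_def N_def)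
  also have "\<dots> \<le> 25/9 * (u / (3 * L ^ m))"
    using \<open>3 * L ^ m \<le> N\<close> \<open>0 < L\<close> u_ge_1 \<open>0 < N\<close> by (intro mult_left_mono divide_left_mono) auto
  also have "\<dots> \<le> u / L ^ m" using \<open>0 < L\<close> u_ge_1 by (simp add: field_simps)
  finally show "25/9 * \<delta>\<^sup>2 \<le> u / L ^ m" .
qed

lemma odds_estimates_close:
  assumes "1 \<le> m" "m \<le> M - 1"
  shows "0 < est1 m" "0 < est0 m"
    and "(1 - est1 m * s0 / (est0 m * s1))\<^sup>2 \<le> u / L ^ m"
    and "(1 - est0 m * s1 / (est1 m * s0))\<^sup>2 \<le> u / L ^ m"
proof -
  note close = accurate[OF assms, unfolded sample_var_accurate_def]
  note err1 = sqrt_ratio_rel_error[OF close[THEN conjunct1] close[THEN conjunct2] sd_pos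
      stage_precision(1)[OF assms]]
  note err0 = sqrt_ratio_rel_error[OF close[THEN conjunct2] close[THEN conjunct1] sd_pos(2,1)
      stage_precision(1)[OF assms]]
  show "0 < est1 m" "0 < est0 m"
    using err1(1) err0(1) by (simp_all add: sample_sd_def)
  show "(1 - est1 m * s0 / (est0 m * s1))\<^sup>2 \<le> u / L ^ m"
    using order_trans[OF err1(2) stage_precision(2)[OF assms]] by (simp add: sample_sd_def)
  show "(1 - est0 m * s1 / (est1 m * s0))\<^sup>2 \<le> u / L ^ m"
    using order_trans[OF err0(2) stage_precision(2)[OF assms]] by (simp add: sample_sd_def)
qed

(* What reaching stage m guarantees: the mismatch of either clipped allocation at stage m
   is bounded below by a number close to 1 -- the estimated mismatch of stage m - 1, which was
   not below it, or 0 when m = 1. *)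
definition clip_lower_bounds :: "nat \<Rightarrow> bool" where
  "clip_lower_bounds m \<longleftrightarrow>
     (\<exists>z \<le> odds_mismatch s1 s0 T (arm m). (1 - z)\<^sup>2 \<le> u / L ^ (m - 1)) \<and>
     (\<exists>z \<le> odds_mismatch s0 s1 T (arm m). (1 - z)\<^sup>2 \<le> u / L ^ (m - 1))"

lemma clipped_outcome_bounds:
  assumes m: "1 \<le> m" "m \<le> M - 1" and "clip_lower_bounds m"
  shows "alloc0 m < arm m \<Longrightarrow> mse_ratio (real T - arm m, arm m) \<le> 1 + 4 * u * L / T"
    and "alloc1 m < arm m \<Longrightarrow> mse_ratio (arm m, real T - arm m) \<le> 1 + 4 * u * L / T"
proof -
  have "m < M" using m M_ge_3 by linarith
  note est = odds_estimates_close[OF m]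
  have "0 < L" using L_gt_1 by simp
  have "u / L ^ m \<le> u / L ^ (m - 1)"
    using L_gt_1 u_ge_1 by (intro divide_left_mono power_increasing) auto
  with est have error: "(1 - est1 m * s0 / (est0 m * s1))\<^sup>2 \<le> u / L ^ (m - 1)"
    "(1 - est0 m * s1 / (est1 m * s0))\<^sup>2 \<le> u / L ^ (m - 1)"
    by linarith+
  have "arm m * (u / L ^ (m - 1)) = 3 * (u * L)"
    using m \<open>m < M\<close> \<open>0 < L\<close> by (simp add: arm_eq power_eq_if[of L m])
  then have bound: "arm m * (u / L ^ (m - 1)) \<le> 3 * (u * L)" by simp
  obtain z0 z1 where
    z0: "z0 \<le> odds_mismatch s1 s0 T (arm m)" "(1 - z0)\<^sup>2 \<le> u / L ^ (m - 1)" and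
    z1: "z1 \<le> odds_mismatch s0 s1 T (arm m)" "(1 - z1)\<^sup>2 \<le> u / L ^ (m - 1)"
    using \<open>clip_lower_bounds m\<close> by (auto simp: clip_lower_bounds_def)
  show "mse_ratio (real T - arm m, arm m) \<le> 1 + 4 * u * L / T" if "alloc0 m < arm m"
    using neyman_ratio_le_clipped[OF sd_pos est(1,2) arm_pos[OF \<open>m < M\<close>] arm_small[OF m(2)]
        that z0 error(1) bound]
    by simp
  show "mse_ratio (arm m, real T - arm m) \<le> 1 + 4 * u * L / T" if "alloc1 m < arm m"
    using neyman_ratio_le_clipped[OF sd_pos(2,1) est(2,1) arm_pos[OF \<open>m < M\<close>] arm_small[OF m(2)]
        _ z1 error(2) bound] that
    by (simp add: proxyV_swap neymanV_swap add.commute)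
qed

lemma estimated_outcome_bounds:
  assumes m: "1 \<le> m" "m + 1 \<le> M - 1"
  shows "alloc0 m < arm (m + 1) \<Longrightarrow> mse_ratio (real T - alloc0 m, alloc0 m) \<le> 1 + 4 * u * L / T"
    and "alloc1 m < arm (m + 1) \<Longrightarrow> mse_ratio (alloc1 m, real T - alloc1 m) \<le> 1 + 4 * u * L / T"
proof -
  have "m + 1 < M" using m by linarith
  have "m \<le> M - 1" using m by linarith
  note est = odds_estimates_close[OF m(1) this]
  have "0 < L" using L_gt_1 by simp
  have bound: "arm (m + 1) * (u / L ^ m) \<le> 3 * (u * L)"
    using \<open>m + 1 < M\<close> \<open>0 < L\<close> by (simp add: arm_eq)
  have T: "0 < real T" using T_ge_16 by simp
  show "mse_ratio (real T - alloc0 m, alloc0 m) \<le> 1 + 4 * u * L / T" if "alloc0 m < arm (m + 1)"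
    using neyman_ratio_le_estimated[OF sd_pos est(1,2) T that arm_small[OF m(2)] est(3) bound]
    by simp
  show "mse_ratio (alloc1 m, real T - alloc1 m) \<le> 1 + 4 * u * L / T" if "alloc1 m < arm (m + 1)"
    using neyman_ratio_le_estimated[OF sd_pos(2,1) est(2,1) T _ arm_small[OF m(2)] est(4) bound] that
    by (simp add: proxyV_swap neymanV_swap add.commute)
qed

lemma final_outcome_bound:
  assumes "m = M - 1"
  shows "mse_ratio (alloc1 m, alloc0 m) \<le> 1 + 4 * u * L / T"
proof -
  have m: "1 \<le> m" "m \<le> M - 1" using assms M_ge_3 by auto
  note est = odds_estimates_close[OF m]
  have T: "0 < real T" using T_ge_16 by simp
  have "0 < L" using L_gt_1 by simp
  have alloc1: "alloc1 m = real T - alloc0 m"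
    using est(1,2) by (simp add: field_simps)
  have "0 < alloc0 m" "alloc0 m < real T"
    using est(1,2) T by (simp_all add: field_simps)
  then have "mse_ratio (alloc1 m, alloc0 m) \<le> 1 + u / L ^ m / 4"
    using neyman_ratio_le_amgm[of s1 s0 "alloc0 m" T "u / L ^ m"] sd_pos est(3,4)
      odds_mismatch_estimated_alloc[of "est1 m" "est0 m" T s1 s0] est(1,2) T alloc1
    by simp
  also have "u / L ^ m / 4 = 15 / 4 * (u * L / T)"
  proof -
    have "L ^ m = real T / (15 * L)"
      unfolding assms by (rule stage_ratio_power_pred) (use M_ge_3 T_ge_16 in auto)
    then show ?thesis using \<open>0 < L\<close> T by (simp add: field_simps)
  qed
  also have "\<dots> \<le> 4 * u * L / T"
    using u_ge_1 \<open>0 < L\<close> T by (simp add: divide_simps)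
  finally show ?thesis by simp
qed

lemma clip_lower_bounds_first: "clip_lower_bounds 1"
proof -
  have "0 < arm 1" "5 * arm 1 \<le> real T"
    using M_ge_3 by (simp_all add: arm_pos arm_small)
  then have "0 < odds_mismatch s1 s0 T (arm 1)" "0 < odds_mismatch s0 s1 T (arm 1)"
    using sd_pos by (simp_all add: odds_mismatch_def)
  then show ?thesis
    using u_ge_1 unfolding clip_lower_bounds_def by (intro conjI exI[of _ 0]) auto
qed

lemma clip_lower_bounds_next:
  assumes m: "1 \<le> m" "m + 1 \<le> M - 1"
    and continue: "\<not> alloc0 m < arm (m + 1)" "\<not> alloc1 m < arm (m + 1)"
  shows "clip_lower_bounds (m + 1)"
proof -
  have "m + 1 < M" using m by linarith
  have "m \<le> M - 1" using m by linarith
  note est = odds_estimates_close[OF m(1) this]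
  have a: "0 < arm (m + 1)" "arm (m + 1) < real T"
    using arm_pos[OF \<open>m + 1 < M\<close>] arm_small[OF m(2)] by simp_all
  have "est1 m * s0 / (est0 m * s1) \<le> odds_mismatch s1 s0 T (arm (m + 1))"
    using continue(1) estimated_alloc_less_iff[OF est(1,2) sd_pos a] by simp
  moreover have "est0 m * s1 / (est1 m * s0) \<le> odds_mismatch s0 s1 T (arm (m + 1))"
    using continue(2) estimated_alloc_less_iff[OF est(2,1) sd_pos(2,1) a] by (simp add: add.commute)
  ultimately show ?thesis
    using est(3,4) unfolding clip_lower_bounds_def by auto
qed

lemma alg_unfold:
  "alg M T y1 y0 m =
    (if M \<le> m + 1 then
       (if alloc0 m < arm m then (real T - arm m, arm m)
        else if alloc1 m < arm m then (arm m, real T - arm m)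
        else (alloc1 m, alloc0 m))
     else if alloc0 m < arm m then (real T - arm m, arm m)
     else if alloc0 m < arm (m + 1) then (real T - alloc0 m, alloc0 m)
     else if alloc1 m < arm m then (arm m, real T - arm m)
     else if alloc1 m < arm (m + 1) then (alloc1 m, real T - alloc1 m)
     else alg M T y1 y0 (m + 1))"
  by (subst alg.simps) (simp add: Let_def)

lemma alg_ratio_le:
  assumes "1 \<le> m" "m \<le> M - 1" "clip_lower_bounds m"
  shows "mse_ratio (alg M T y1 y0 m) \<le> 1 + 4 * u * L / T"
  using assms
proof (induction "M - m" arbitrary: m rule: less_induct)
  case less
  note clip = clipped_outcome_bounds[OF less.prems]
  show ?case
  proof (cases "M \<le> m + 1")
    case True
    then have "alg M T y1 y0 m = (if alloc0 m < arm m then (real T - arm m, arm m)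
        else if alloc1 m < arm m then (arm m, real T - arm m) else (alloc1 m, alloc0 m))"
      by (subst alg_unfold) simp
    moreover have "m = M - 1" using True less.prems by linarith
    ultimately show ?thesis
      using clip final_outcome_bound[of m] by (simp del: alg.simps)
  next
    case False
    then have m: "1 \<le> m" "m + 1 \<le> M - 1" using less.prems by auto
    have "arm m < arm (m + 1)"
      using m L_gt_1 by (simp add: arm_eq)
    then have step: "alg M T y1 y0 m =
        (if alloc0 m < arm m then (real T - arm m, arm m)
         else if alloc0 m < arm (m + 1) then (real T - alloc0 m, alloc0 m)
         else if alloc1 m < arm m then (arm m, real T - arm m)
         else if alloc1 m < arm (m + 1) then (alloc1 m, real T - alloc1 m)
         else alg M T y1 y0 (m + 1))"
      using False by (subst alg_unfold) simp
    show ?thesis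
    proof (cases "alloc0 m < arm (m + 1) \<or> alloc1 m < arm (m + 1)")
      case True
      then show ?thesis
        using clip estimated_outcome_bounds[OF m] unfolding step by (auto simp del: alg.simps)
    next
      case continue: False
      then have "alg M T y1 y0 m = alg M T y1 y0 (m + 1)"
        using \<open>arm m < arm (m + 1)\<close> unfolding step by (simp del: alg.simps)
      moreover have "mse_ratio (alg M T y1 y0 (m + 1)) \<le> 1 + 4 * u * L / T"
        using m clip_lower_bounds_next[OF m] continue by (intro less.hyps) auto
      ultimately show ?thesis by simp
    qed
  qed
qed

lemma adaptive_alloc_ratio_le: "mse_ratio (adaptive_alloc M T y1 y0) \<le> 1 + 4 * u * L / T"
  unfolding adaptive_alloc_def
  using M_ge_3 clip_lower_bounds_first by (intro alg_ratio_le) auto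

end

lemma adaptive_alloc_ratio_le_powr:
  assumes "accurate_estimates M T (real T powr \<epsilon>) s1 s0 y1 y0"
  shows "proxyV s1 s0 (fst (adaptive_alloc M T y1 y0)) (snd (adaptive_alloc M T y1 y0))
           / neymanV s1 s0 (real T)
         \<le> 1 + 4 * 15 powr (- (1 / real M)) * real T powr (- ((real M - 1) / real M) + \<epsilon>)"
proof -
  interpret accurate_estimates M T "real T powr \<epsilon>" s1 s0 y1 y0 by fact
  have "0 < T" "0 < M" using M_ge_3 T_ge_16 by auto
  then show ?thesis using adaptive_alloc_ratio_le stage_bound_eq[of T M \<epsilon>] by simp
qed

section \<open>Concentration of the sample variance\<close>

definition cross_sum :: "nat \<Rightarrow> (nat \<Rightarrow> real) \<Rightarrow> real" where
  "cross_sum n z = (\<Sum>j<n. z j * (\<Sum>i<j. z i))"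

lemma cross_sum_Suc: "cross_sum (Suc n) z = cross_sum n z + z n * (\<Sum>i<n. z i)"
  by (simp add: cross_sum_def)

lemma cross_sum_cong: "(\<And>i. i < n \<Longrightarrow> z i = z' i) \<Longrightarrow> cross_sum n z = cross_sum n z'"
  unfolding cross_sum_def by (intro sum.cong refl arg_cong2[where f = times] sum.cong) auto

lemma measurable_cross_sum [measurable]: "cross_sum n \<in> borel_measurable (PiM UNIV (\<lambda>_. borel))"
  unfolding cross_sum_def by measurable

lemma power2_sum_eq_cross_sum: "(\<Sum>i<n. z i)\<^sup>2 = (\<Sum>i<n. (z i)\<^sup>2) + 2 * cross_sum n z"
  by (induction n) (simp_all add: cross_sum_def power2_eq_square algebra_simps)

lemma sample_var_add_const: "sample_var (\<lambda>i. x i + c) n = sample_var x n"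
proof (cases "n = 0")
  case False
  then have "(\<Sum>i<n. x i + c) / real n = (\<Sum>i<n. x i) / real n + c"
    by (simp add: sum.distrib field_simps)
  then show ?thesis by (simp add: sample_var_def Let_def)
qed (simp add: sample_var_def)

(* For centred independent z the two sums on the right are uncorrelated
   (expectation_sq_excess_cross). *)
lemma sample_var_decomposition:
  assumes "2 \<le> n"
  shows "sample_var z n - s
           = (\<Sum>i<n. (z i)\<^sup>2 - s) / n - 2 * cross_sum n z / (real n * (real n - 1))"
proof -
  define S where "S = (\<Sum>i<n. z i)"
  have n: "real n \<noteq> 0" "real n - 1 \<noteq> 0" using assms by auto
  have "(\<Sum>i<k. (z i - c)\<^sup>2) = (\<Sum>i<k. (z i)\<^sup>2) - 2 * c * (\<Sum>i<k. z i) + k * c\<^sup>2" for k c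
    by (induction k) (simp_all add: power2_eq_square algebra_simps)
  then have "(\<Sum>i<n. (z i - S / n)\<^sup>2) = (\<Sum>i<n. (z i)\<^sup>2) - 2 * (S / n) * S + n * (S / n)\<^sup>2"
    unfolding S_def .
  also have "\<dots> = (\<Sum>i<n. (z i)\<^sup>2) * (1 - 1 / n) - 2 * cross_sum n z / n"
    using n power2_sum_eq_cross_sum[of z n] by (simp add: S_def power2_eq_square field_simps)
  finally have dev: "(\<Sum>i<n. (z i - S / n)\<^sup>2) = (\<Sum>i<n. (z i)\<^sup>2) * (1 - 1 / n) - 2 * cross_sum n z / n" .
  have U: "(\<Sum>i<n. (z i)\<^sup>2 - s) = (\<Sum>i<n. (z i)\<^sup>2) - n * s"
    by (simp add: sum_subtractf)
  show ?thesis
    unfolding sample_var_def Let_def S_def[symmetric] dev U using n by (simp add: field_simps)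
qed

definition square_integrable :: "'a measure \<Rightarrow> ('a \<Rightarrow> real) \<Rightarrow> bool" where
  "square_integrable M f \<longleftrightarrow> f \<in> borel_measurable M \<and> integrable M (\<lambda>x. (f x)\<^sup>2)"

definition fourth_integrable :: "'a measure \<Rightarrow> ('a \<Rightarrow> real) \<Rightarrow> bool" where
  "fourth_integrable M f \<longleftrightarrow> f \<in> borel_measurable M \<and> integrable M (\<lambda>x. f x ^ 4)"

lemma integrable_mult_square_integrable:
  assumes "square_integrable M f" "square_integrable M g"
  shows "integrable M (\<lambda>x. f x * g x)"
proof (rule Bochner_Integration.integrable_bound)
  show "integrable M (\<lambda>x. (f x)\<^sup>2 + (g x)\<^sup>2)"
    using assms by (simp add: square_integrable_def)
  have "\<bar>a * b\<bar> \<le> a\<^sup>2 + b\<^sup>2" for a b :: real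
  proof -
    have "2 * (\<bar>a\<bar> * \<bar>b\<bar>) \<le> a\<^sup>2 + b\<^sup>2"
      using zero_le_power2[of "\<bar>a\<bar> - \<bar>b\<bar>"] by (simp add: power2_diff)
    moreover have "0 \<le> \<bar>a\<bar> * \<bar>b\<bar>" by simp
    ultimately show ?thesis unfolding abs_mult by linarith
  qed
  then show "AE x in M. norm (f x * g x) \<le> norm ((f x)\<^sup>2 + (g x)\<^sup>2)"
    by simp
qed (use assms in \<open>simp add: square_integrable_def borel_measurable_times\<close>)

lemma square_integrable_add:
  assumes "square_integrable M f" "square_integrable M g"
  shows "square_integrable M (\<lambda>x. f x + g x)"
proof -
  have "integrable M (\<lambda>x. (f x)\<^sup>2 + (g x)\<^sup>2 + 2 * (f x * g x))"
    using assms integrable_mult_square_integrable[OF assms] by (simp add: square_integrable_def)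
  then show ?thesis
    using assms by (simp add: square_integrable_def power2_sum mult.assoc borel_measurable_add)
qed

lemma square_integrable_sum:
  fixes n :: nat
  shows "(\<And>i. i < n \<Longrightarrow> square_integrable M (f i)) \<Longrightarrow> square_integrable M (\<lambda>x. \<Sum>i<n. f i x)"
  by (induction n) (simp_all add: square_integrable_add, simp add: square_integrable_def)

lemma square_integrable_mult:
  assumes "fourth_integrable M f" "fourth_integrable M g"
  shows "square_integrable M (\<lambda>x. f x * g x)"
proof -
  have "square_integrable M (\<lambda>x. (f x)\<^sup>2)" "square_integrable M (\<lambda>x. (g x)\<^sup>2)"
    using assms by (auto simp: square_integrable_def fourth_integrable_def
        intro: borel_measurable_power simp flip: power_mult)
  from integrable_mult_square_integrable[OF this] show ?thesis
    using assms
    by (simp add: square_integrable_def fourth_integrable_def power_mult_distrib borel_measurable_times)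
qed

lemma power4_add_le: "(a + b) ^ 4 \<le> 8 * a ^ 4 + 8 * (b :: real) ^ 4"
proof -
  have sq: "(x + y)\<^sup>2 \<le> 2 * x\<^sup>2 + 2 * y\<^sup>2" for x y :: real
    using zero_le_power2[of "x - y"] by (simp add: power2_eq_square algebra_simps)
  have "(a + b) ^ 4 = ((a + b)\<^sup>2)\<^sup>2" by simp
  also have "\<dots> \<le> (2 * a\<^sup>2 + 2 * b\<^sup>2)\<^sup>2" using sq[of a b] by (intro power_mono) auto
  also have "\<dots> \<le> 2 * (2 * a\<^sup>2)\<^sup>2 + 2 * (2 * b\<^sup>2)\<^sup>2" by (rule sq)
  also have "\<dots> = 8 * a ^ 4 + 8 * b ^ 4" by simp
  finally show ?thesis .
qed

lemma fourth_integrable_add: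
  assumes "fourth_integrable M f" "fourth_integrable M g"
  shows "fourth_integrable M (\<lambda>x. f x + g x)"
proof -
  have [measurable]: "f \<in> borel_measurable M" "g \<in> borel_measurable M"
    using assms by (simp_all add: fourth_integrable_def)
  have "integrable M (\<lambda>x. (f x + g x) ^ 4)"
    by (rule Bochner_Integration.integrable_bound[where f = "\<lambda>x. 8 * f x ^ 4 + 8 * g x ^ 4"])
      (use assms power4_add_le in \<open>auto simp: fourth_integrable_def zero_le_even_power\<close>)
  then show ?thesis by (simp add: fourth_integrable_def)
qed

lemma fourth_integrable_sum:
  fixes n :: nat
  shows "(\<And>i. i < n \<Longrightarrow> fourth_integrable M (f i)) \<Longrightarrow> fourth_integrable M (\<lambda>x. \<Sum>i<n. f i x)"
  by (induction n) (simp_all add: fourth_integrable_add, simp add: fourth_integrable_def)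

lemma (in finite_measure) fourth_integrable_const: "fourth_integrable M (\<lambda>x. c)"
  by (simp add: fourth_integrable_def)

lemma (in finite_measure) square_integrable_const: "square_integrable M (\<lambda>x. c)"
  by (simp add: square_integrable_def)

lemma (in finite_measure) square_integrable_if_fourth:
  "fourth_integrable M f \<Longrightarrow> square_integrable M f"
  using square_integrable_mult[OF _ fourth_integrable_const, of f 1] by simp

lemma (in finite_measure) integrable_if_square:
  "square_integrable M f \<Longrightarrow> integrable M f"
  by (simp add: square_integrable_def square_integrable_imp_integrable)

lemma (in prob_space) indep_var_past:
  fixes X :: "nat \<Rightarrow> 'a \<Rightarrow> real" and h :: "real \<Rightarrow> real" and F :: "(nat \<Rightarrow> real) \<Rightarrow> real"
  assumes indep: "indep_vars (\<lambda>_. borel) X UNIV"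
    and [measurable]: "h \<in> borel_measurable borel" "F \<in> borel_measurable (PiM UNIV (\<lambda>_. borel))"
    and past: "\<And>z z'. (\<And>i. i < n \<Longrightarrow> z i = z' i) \<Longrightarrow> F z = F z'"
  shows "indep_var borel (\<lambda>\<omega>. h (X n \<omega>)) borel (\<lambda>\<omega>. F (\<lambda>i. X i \<omega>))"
proof -
  define extend where "extend z i = (if i < n then z i else 0)" for z :: "nat \<Rightarrow> real" and i
  have [measurable]: "extend \<in> PiM {..<n} (\<lambda>_. borel) \<rightarrow>\<^sub>M PiM UNIV (\<lambda>_. borel)"
    unfolding extend_def
  proof (rule measurable_PiM_single')
    show "(\<lambda>z. if i < n then z i else 0) \<in> borel_measurable (Pi\<^sub>M {..<n} (\<lambda>_. borel))" for i
      by (cases "i < n") auto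
  qed auto
  have "indep_var borel ((\<lambda>z. h (z n)) \<circ> (\<lambda>\<omega>. restrict (\<lambda>i. X i \<omega>) {n}))
      borel ((\<lambda>z. F (extend z)) \<circ> (\<lambda>\<omega>. restrict (\<lambda>i. X i \<omega>) {..<n}))"
    by (rule indep_var_compose[OF indep_var_restrict[OF indep]]) auto
  moreover have "(\<lambda>z. F (extend z)) \<circ> (\<lambda>\<omega>. restrict (\<lambda>i. X i \<omega>) {..<n}) = (\<lambda>\<omega>. F (\<lambda>i. X i \<omega>))"
    by (auto simp: fun_eq_iff extend_def intro!: past)
  ultimately show ?thesis by (simp add: comp_def)
qed

locale centered_indep_seq = prob_space +
  fixes Z :: "nat \<Rightarrow> 'a \<Rightarrow> real" and \<sigma>2 \<mu>4 :: real
  assumes indep: "indep_vars (\<lambda>_. borel) Z UNIV"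
    and integrable_fourth: "\<And>i. integrable M (\<lambda>\<omega>. Z i \<omega> ^ 4)"
    and mean_zero: "\<And>i. expectation (Z i) = 0"
    and second_moment: "\<And>i. expectation (\<lambda>\<omega>. (Z i \<omega>)\<^sup>2) = \<sigma>2"
    and fourth_moment: "\<And>i. expectation (\<lambda>\<omega>. Z i \<omega> ^ 4) = \<mu>4"
begin

abbreviation psum :: "nat \<Rightarrow> 'a \<Rightarrow> real" where
  "psum n \<omega> \<equiv> \<Sum>i<n. Z i \<omega>"

abbreviation sq_excess :: "nat \<Rightarrow> 'a \<Rightarrow> real" where
  "sq_excess n \<omega> \<equiv> \<Sum>i<n. (Z i \<omega>)\<^sup>2 - \<sigma>2"

abbreviation cross :: "nat \<Rightarrow> 'a \<Rightarrow> real" where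
  "cross n \<omega> \<equiv> cross_sum n (\<lambda>i. Z i \<omega>)"

lemma measurable_Z [measurable]: "Z i \<in> borel_measurable M"
  using indep by (auto simp: indep_vars_def)

lemma fourth_integrable_Z: "fourth_integrable M (Z i)"
  by (simp add: fourth_integrable_def integrable_fourth)

lemma fourth_integrable_psum: "fourth_integrable M (psum n)"
  by (intro fourth_integrable_sum fourth_integrable_Z)

lemma square_integrable_Z: "square_integrable M (Z i)"
  by (rule square_integrable_if_fourth[OF fourth_integrable_Z])

lemma square_integrable_psum: "square_integrable M (psum n)"
  by (rule square_integrable_if_fourth[OF fourth_integrable_psum])

lemma square_integrable_sq_excess_term: "square_integrable M (\<lambda>\<omega>. (Z i \<omega>)\<^sup>2 - \<sigma>2)"
  using square_integrable_add[OF square_integrable_mult[OF fourth_integrable_Z fourth_integrable_Z]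
      square_integrable_const[of "- \<sigma>2"]]
  by (simp add: power2_eq_square)

lemma square_integrable_sq_excess: "square_integrable M (sq_excess n)"
  by (intro square_integrable_sum square_integrable_sq_excess_term)

lemma square_integrable_cross: "square_integrable M (cross n)"
  unfolding cross_sum_def
  by (intro square_integrable_sum square_integrable_mult fourth_integrable_Z fourth_integrable_psum)

lemmas square_integrable =
  square_integrable_Z square_integrable_psum square_integrable_sq_excess_term
  square_integrable_sq_excess square_integrable_cross

lemma integrable_Z [simp]: "integrable M (Z i)"
  and integrable_psum [simp]: "integrable M (psum n)"
  and integrable_sq_excess [simp]: "integrable M (sq_excess n)"
  and integrable_cross [simp]: "integrable M (cross n)"
  using square_integrable by (simp_all add: integrable_if_square)

lemma integrable_square [simp]:
  "integrable M (\<lambda>\<omega>. (Z i \<omega>)\<^sup>2)" "integrable M (\<lambda>\<omega>. (psum n \<omega>)\<^sup>2)"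
  "integrable M (\<lambda>\<omega>. ((Z i \<omega>)\<^sup>2 - \<sigma>2)\<^sup>2)"
  "integrable M (\<lambda>\<omega>. (sq_excess n \<omega>)\<^sup>2)" "integrable M (\<lambda>\<omega>. (cross n \<omega>)\<^sup>2)"
  using square_integrable by (simp_all add: square_integrable_def)

lemma integrable_sq_excess_term [simp]: "integrable M (\<lambda>\<omega>. (Z i \<omega>)\<^sup>2 - \<sigma>2)"
  using square_integrable by (simp add: integrable_if_square)

lemma integrable_products [simp]:
  "integrable M (\<lambda>\<omega>. Z i \<omega> * psum n \<omega>)"
  "integrable M (\<lambda>\<omega>. psum n \<omega> * cross n \<omega>)"
  "integrable M (\<lambda>\<omega>. sq_excess n \<omega> * psum n \<omega>)"
  "integrable M (\<lambda>\<omega>. ((Z i \<omega>)\<^sup>2 - \<sigma>2) * Z i \<omega>)"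
  "integrable M (\<lambda>\<omega>. ((Z i \<omega>)\<^sup>2 - \<sigma>2) * sq_excess n \<omega>)"
  "integrable M (\<lambda>\<omega>. sq_excess n \<omega> * cross n \<omega>)"
  "integrable M (\<lambda>\<omega>. ((Z i \<omega>)\<^sup>2 - \<sigma>2) * cross n \<omega>)"
  using square_integrable by (simp_all add: integrable_mult_square_integrable)

lemma expectation_mult_past:
  fixes h :: "real \<Rightarrow> real" and F :: "(nat \<Rightarrow> real) \<Rightarrow> real"
  assumes [measurable]: "h \<in> borel_measurable borel" "F \<in> borel_measurable (PiM UNIV (\<lambda>_. borel))"
    and past: "\<And>z z'. (\<And>i. i < n \<Longrightarrow> z i = z' i) \<Longrightarrow> F z = F z'"
    and "integrable M (\<lambda>\<omega>. h (Z n \<omega>))" "integrable M (\<lambda>\<omega>. F (\<lambda>i. Z i \<omega>))"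
  shows "integrable M (\<lambda>\<omega>. h (Z n \<omega>) * F (\<lambda>i. Z i \<omega>))"
    and "expectation (\<lambda>\<omega>. h (Z n \<omega>) * F (\<lambda>i. Z i \<omega>))
           = expectation (\<lambda>\<omega>. h (Z n \<omega>)) * expectation (\<lambda>\<omega>. F (\<lambda>i. Z i \<omega>))"
proof -
  have "indep_var borel (\<lambda>\<omega>. h (Z n \<omega>)) borel (\<lambda>\<omega>. F (\<lambda>i. Z i \<omega>))"
    by (rule indep_var_past[OF indep assms(1,2)]) (rule past)
  from indep_var_integrable[OF this assms(4,5)] indep_var_lebesgue_integral[OF this assms(4,5)]
  show "integrable M (\<lambda>\<omega>. h (Z n \<omega>) * F (\<lambda>i. Z i \<omega>))"
    and "expectation (\<lambda>\<omega>. h (Z n \<omega>) * F (\<lambda>i. Z i \<omega>))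
           = expectation (\<lambda>\<omega>. h (Z n \<omega>)) * expectation (\<lambda>\<omega>. F (\<lambda>i. Z i \<omega>))"
    by simp_all
qed

lemma expectation_sq_excess_term: "expectation (\<lambda>\<omega>. (Z i \<omega>)\<^sup>2 - \<sigma>2) = 0"
  by (simp add: second_moment prob_space)

lemma expectation_psum_sq: "expectation (\<lambda>\<omega>. (psum n \<omega>)\<^sup>2) = n * \<sigma>2"
proof (induction n)
  case (Suc n)
  have "expectation (\<lambda>\<omega>. Z n \<omega> * psum n \<omega>) = expectation (Z n) * expectation (psum n)"
    by (rule expectation_mult_past(2)[where h = "\<lambda>x. x" and F = "\<lambda>z. \<Sum>i<n. z i"])
      (auto intro!: sum.cong)
  then have cross: "expectation (\<lambda>\<omega>. Z n \<omega> * psum n \<omega>) = 0"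
    by (simp add: mean_zero)
  have "expectation (\<lambda>\<omega>. (psum (Suc n) \<omega>)\<^sup>2)
      = expectation (\<lambda>\<omega>. (psum n \<omega>)\<^sup>2 + 2 * (Z n \<omega> * psum n \<omega>) + (Z n \<omega>)\<^sup>2)"
    by (simp add: power2_sum algebra_simps)
  also have "\<dots> = expectation (\<lambda>\<omega>. (psum n \<omega>)\<^sup>2) + 2 * expectation (\<lambda>\<omega>. Z n \<omega> * psum n \<omega>)
      + expectation (\<lambda>\<omega>. (Z n \<omega>)\<^sup>2)"
    by simp
  finally show ?case using Suc cross by (simp add: second_moment algebra_simps)
qed simp

lemma expectation_sq_excess_sq: "expectation (\<lambda>\<omega>. (sq_excess n \<omega>)\<^sup>2) = n * (\<mu>4 - \<sigma>2\<^sup>2)"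
proof (induction n)
  case (Suc n)
  have "expectation (\<lambda>\<omega>. ((Z n \<omega>)\<^sup>2 - \<sigma>2) * sq_excess n \<omega>)
      = expectation (\<lambda>\<omega>. (Z n \<omega>)\<^sup>2 - \<sigma>2) * expectation (sq_excess n)"
    by (rule expectation_mult_past(2)[where h = "\<lambda>x. x\<^sup>2 - \<sigma>2" and F = "\<lambda>z. \<Sum>i<n. (z i)\<^sup>2 - \<sigma>2"])
      (auto intro!: sum.cong)
  then have cross: "expectation (\<lambda>\<omega>. ((Z n \<omega>)\<^sup>2 - \<sigma>2) * sq_excess n \<omega>) = 0"
    by (simp add: expectation_sq_excess_term)
  have "expectation (\<lambda>\<omega>. ((Z n \<omega>)\<^sup>2 - \<sigma>2)\<^sup>2)
      = expectation (\<lambda>\<omega>. Z n \<omega> ^ 4 + (- 2 * \<sigma>2) * (Z n \<omega>)\<^sup>2 + \<sigma>2\<^sup>2)"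
    by (rule arg_cong[where f = expectation])
      (simp add: fun_eq_iff power2_eq_square power4_eq_xxxx algebra_simps)
  also have "\<dots> = \<mu>4 + (- 2 * \<sigma>2) * \<sigma>2 + \<sigma>2\<^sup>2"
    by (simp add: integrable_fourth fourth_moment second_moment prob_space)
  finally have square_term: "expectation (\<lambda>\<omega>. ((Z n \<omega>)\<^sup>2 - \<sigma>2)\<^sup>2) = \<mu>4 - \<sigma>2\<^sup>2"
    by (simp add: power2_eq_square)
  have "expectation (\<lambda>\<omega>. (sq_excess (Suc n) \<omega>)\<^sup>2)
      = expectation (\<lambda>\<omega>. (sq_excess n \<omega>)\<^sup>2 + 2 * (((Z n \<omega>)\<^sup>2 - \<sigma>2) * sq_excess n \<omega>)
          + ((Z n \<omega>)\<^sup>2 - \<sigma>2)\<^sup>2)"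
    by (rule arg_cong[where f = expectation]) (simp add: fun_eq_iff power2_eq_square algebra_simps)
  also have "\<dots> = expectation (\<lambda>\<omega>. (sq_excess n \<omega>)\<^sup>2)
      + 2 * expectation (\<lambda>\<omega>. ((Z n \<omega>)\<^sup>2 - \<sigma>2) * sq_excess n \<omega>)
      + expectation (\<lambda>\<omega>. ((Z n \<omega>)\<^sup>2 - \<sigma>2)\<^sup>2)"
    by simp
  finally show ?case using Suc cross square_term by (simp add: algebra_simps)
qed simp

lemma expectation_cross_sq:
  "expectation (\<lambda>\<omega>. (cross n \<omega>)\<^sup>2) = \<sigma>2\<^sup>2 * (real n * (real n - 1)) / 2"
proof (induction n)
  case (Suc n)
  have mixed: "expectation (\<lambda>\<omega>. Z n \<omega> * (psum n \<omega> * cross n \<omega>))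
      = expectation (Z n) * expectation (\<lambda>\<omega>. psum n \<omega> * cross n \<omega>)"
    "integrable M (\<lambda>\<omega>. Z n \<omega> * (psum n \<omega> * cross n \<omega>))"
    by (rule expectation_mult_past[where h = "\<lambda>x. x" and F = "\<lambda>z. (\<Sum>i<n. z i) * cross_sum n z"];
        auto intro!: arg_cong2[where f = times] sum.cong cross_sum_cong)+
  have square: "expectation (\<lambda>\<omega>. (Z n \<omega>)\<^sup>2 * (psum n \<omega>)\<^sup>2)
      = expectation (\<lambda>\<omega>. (Z n \<omega>)\<^sup>2) * expectation (\<lambda>\<omega>. (psum n \<omega>)\<^sup>2)"
    "integrable M (\<lambda>\<omega>. (Z n \<omega>)\<^sup>2 * (psum n \<omega>)\<^sup>2)"
    by (rule expectation_mult_past[where h = "\<lambda>x. x\<^sup>2" and F = "\<lambda>z. (\<Sum>i<n. z i)\<^sup>2"];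
        auto intro!: sum.cong)+
  have "expectation (\<lambda>\<omega>. (cross (Suc n) \<omega>)\<^sup>2)
      = expectation (\<lambda>\<omega>. (cross n \<omega>)\<^sup>2 + 2 * (Z n \<omega> * (psum n \<omega> * cross n \<omega>))
          + (Z n \<omega>)\<^sup>2 * (psum n \<omega>)\<^sup>2)"
    by (simp add: cross_sum_Suc power2_sum power_mult_distrib algebra_simps)
  also have "\<dots> = expectation (\<lambda>\<omega>. (cross n \<omega>)\<^sup>2)
      + 2 * expectation (\<lambda>\<omega>. Z n \<omega> * (psum n \<omega> * cross n \<omega>))
      + expectation (\<lambda>\<omega>. (Z n \<omega>)\<^sup>2 * (psum n \<omega>)\<^sup>2)"
    using mixed(2) square(2) by simp
  also have "\<dots> = \<sigma>2\<^sup>2 * (real n * (real n - 1)) / 2 + \<sigma>2 * (n * \<sigma>2)"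
    using Suc mixed(1) square(1) by (simp add: mean_zero second_moment expectation_psum_sq)
  also have "\<dots> = \<sigma>2\<^sup>2 * (real (Suc n) * (real (Suc n) - 1)) / 2"
    by (simp add: power2_eq_square field_simps)
  finally show ?case .
qed (simp add: cross_sum_def)

lemma expectation_sq_excess_cross: "expectation (\<lambda>\<omega>. sq_excess n \<omega> * cross n \<omega>) = 0"
proof (induction n)
  case (Suc n)
  have excess_cross: "expectation (\<lambda>\<omega>. ((Z n \<omega>)\<^sup>2 - \<sigma>2) * cross n \<omega>)
      = expectation (\<lambda>\<omega>. (Z n \<omega>)\<^sup>2 - \<sigma>2) * expectation (cross n)"
    by (rule expectation_mult_past(2)[where h = "\<lambda>x. x\<^sup>2 - \<sigma>2" and F = "cross_sum n"])
      (auto intro!: cross_sum_cong)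
  have Z_excess_psum: "expectation (\<lambda>\<omega>. Z n \<omega> * (sq_excess n \<omega> * psum n \<omega>))
      = expectation (Z n) * expectation (\<lambda>\<omega>. sq_excess n \<omega> * psum n \<omega>)"
    "integrable M (\<lambda>\<omega>. Z n \<omega> * (sq_excess n \<omega> * psum n \<omega>))"
    by (rule expectation_mult_past[where h = "\<lambda>x. x"
          and F = "\<lambda>z. (\<Sum>i<n. (z i)\<^sup>2 - \<sigma>2) * (\<Sum>i<n. z i)"];
        auto intro!: arg_cong2[where f = times] sum.cong)+
  have excess_Z_psum: "expectation (\<lambda>\<omega>. ((Z n \<omega>)\<^sup>2 - \<sigma>2) * Z n \<omega> * psum n \<omega>)
      = expectation (\<lambda>\<omega>. ((Z n \<omega>)\<^sup>2 - \<sigma>2) * Z n \<omega>) * expectation (psum n)"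
    "integrable M (\<lambda>\<omega>. ((Z n \<omega>)\<^sup>2 - \<sigma>2) * Z n \<omega> * psum n \<omega>)"
    by (rule expectation_mult_past[where h = "\<lambda>x. (x\<^sup>2 - \<sigma>2) * x" and F = "\<lambda>z. \<Sum>i<n. z i"];
        auto intro!: sum.cong)+
  have "expectation (\<lambda>\<omega>. sq_excess (Suc n) \<omega> * cross (Suc n) \<omega>)
      = expectation (\<lambda>\<omega>. sq_excess n \<omega> * cross n \<omega> + ((Z n \<omega>)\<^sup>2 - \<sigma>2) * cross n \<omega>
          + Z n \<omega> * (sq_excess n \<omega> * psum n \<omega>) + ((Z n \<omega>)\<^sup>2 - \<sigma>2) * Z n \<omega> * psum n \<omega>)"
    by (simp add: cross_sum_Suc algebra_simps)
  also have "\<dots> = expectation (\<lambda>\<omega>. sq_excess n \<omega> * cross n \<omega>)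
      + expectation (\<lambda>\<omega>. ((Z n \<omega>)\<^sup>2 - \<sigma>2) * cross n \<omega>)
      + expectation (\<lambda>\<omega>. Z n \<omega> * (sq_excess n \<omega> * psum n \<omega>))
      + expectation (\<lambda>\<omega>. ((Z n \<omega>)\<^sup>2 - \<sigma>2) * Z n \<omega> * psum n \<omega>)"
    using Z_excess_psum(2) excess_Z_psum(2) by simp
  finally show ?case
    using Suc excess_cross Z_excess_psum(1) excess_Z_psum(1)
    by (simp add: expectation_sq_excess_term mean_zero)
qed simp

lemma sample_var_mse:
  assumes "2 \<le> n"
  shows "integrable M (\<lambda>\<omega>. (sample_var (\<lambda>i. Z i \<omega>) n - \<sigma>2)\<^sup>2)"
    and "expectation (\<lambda>\<omega>. (sample_var (\<lambda>i. Z i \<omega>) n - \<sigma>2)\<^sup>2)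
           = (\<mu>4 - \<sigma>2\<^sup>2) / n + 2 * \<sigma>2\<^sup>2 / (real n * (real n - 1))"
proof -
  define a b where "a = 1 / real n" and "b = 2 / (real n * (real n - 1))"
  have decomp: "sample_var (\<lambda>i. Z i \<omega>) n - \<sigma>2 = a * sq_excess n \<omega> - b * cross n \<omega>" for \<omega>
    using sample_var_decomposition[OF assms] by (simp add: a_def b_def)
  have dev: "(\<lambda>\<omega>. (sample_var (\<lambda>i. Z i \<omega>) n - \<sigma>2)\<^sup>2) = (\<lambda>\<omega>. a\<^sup>2 * (sq_excess n \<omega>)\<^sup>2
      + (- 2 * a * b) * (sq_excess n \<omega> * cross n \<omega>) + b\<^sup>2 * (cross n \<omega>)\<^sup>2)"
    by (simp only: decomp) (simp add: fun_eq_iff power2_eq_square algebra_simps)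
  show "integrable M (\<lambda>\<omega>. (sample_var (\<lambda>i. Z i \<omega>) n - \<sigma>2)\<^sup>2)"
    unfolding dev by simp
  have "expectation (\<lambda>\<omega>. (sample_var (\<lambda>i. Z i \<omega>) n - \<sigma>2)\<^sup>2)
      = a\<^sup>2 * (n * (\<mu>4 - \<sigma>2\<^sup>2)) + b\<^sup>2 * (\<sigma>2\<^sup>2 * (real n * (real n - 1)) / 2)"
    unfolding dev
    by (simp add: expectation_sq_excess_sq expectation_cross_sq expectation_sq_excess_cross)
  also have "\<dots> = (\<mu>4 - \<sigma>2\<^sup>2) / n + 2 * \<sigma>2\<^sup>2 / (real n * (real n - 1))"
  proof -
    define d where "d = real n * (real n - 1)"
    have "0 < d" using assms by (simp add: d_def)
    then have "b\<^sup>2 * (\<sigma>2\<^sup>2 * d / 2) = 2 * \<sigma>2\<^sup>2 / d"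
      by (simp add: b_def d_def[symmetric] power2_eq_square field_simps)
    moreover have "a\<^sup>2 * (n * (\<mu>4 - \<sigma>2\<^sup>2)) = (\<mu>4 - \<sigma>2\<^sup>2) / n"
      using assms by (simp add: a_def power2_eq_square)
    ultimately show ?thesis by (simp add: d_def)
  qed
  finally show "expectation (\<lambda>\<omega>. (sample_var (\<lambda>i. Z i \<omega>) n - \<sigma>2)\<^sup>2)
      = (\<mu>4 - \<sigma>2\<^sup>2) / n + 2 * \<sigma>2\<^sup>2 / (real n * (real n - 1))" .
qed

lemma sample_var_mse_le:
  assumes "3 \<le> n"
  shows "expectation (\<lambda>\<omega>. (sample_var (\<lambda>i. Z i \<omega>) n - \<sigma>2)\<^sup>2) \<le> \<mu>4 / n"
proof -
  have "2 * \<sigma>2\<^sup>2 / (real n * (real n - 1)) \<le> \<sigma>2\<^sup>2 / n"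
    using assms by (simp add: field_simps mult_right_mono)
  then show ?thesis
    using assms sample_var_mse(2)[of n] by (simp add: diff_divide_distrib)
qed

end

lemma measurable_sample_var [measurable]:
  assumes [measurable]: "\<And>i. X i \<in> borel_measurable M"
  shows "(\<lambda>\<omega>. sample_var (\<lambda>i. X i \<omega>) n) \<in> borel_measurable M"
  unfolding sample_var_def Let_def by measurable

lemma (in prob_space) centered_indep_seq_iid:
  fixes X :: "nat \<Rightarrow> 'a \<Rightarrow> real"
  defines "\<mu> \<equiv> pop_mean M (X 0)"
  assumes indep: "indep_vars (\<lambda>_. borel) X UNIV"
    and ident: "\<And>i. distr M borel (X i) = distr M borel (X 0)"
    and fourth: "integrable M (\<lambda>\<omega>. X 0 \<omega> ^ 4)"
  shows "centered_indep_seq M (\<lambda>i \<omega>. X i \<omega> - \<mu>) (pop_var M (X 0))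
           (expectation (\<lambda>\<omega>. (X 0 \<omega> - \<mu>) ^ 4))"
proof -
  have [measurable]: "X i \<in> borel_measurable M" for i
    using indep by (auto simp: indep_vars_def)
  have same: "expectation (\<lambda>\<omega>. k (X i \<omega>)) = expectation (\<lambda>\<omega>. k (X 0 \<omega>))
      \<and> (integrable M (\<lambda>\<omega>. k (X i \<omega>)) \<longleftrightarrow> integrable M (\<lambda>\<omega>. k (X 0 \<omega>)))"
    if [measurable]: "k \<in> borel_measurable borel" for k :: "real \<Rightarrow> real" and i
    using integral_distr[of "X i" M borel k] integral_distr[of "X 0" M borel k]
      integrable_distr_eq[of "X i" M borel k] integrable_distr_eq[of "X 0" M borel k] ident[of i]
    by simp
  have "fourth_integrable M (\<lambda>\<omega>. X 0 \<omega> + (- \<mu>))"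
    using fourth by (intro fourth_integrable_add fourth_integrable_const) (simp add: fourth_integrable_def)
  then have centered: "fourth_integrable M (\<lambda>\<omega>. X 0 \<omega> - \<mu>)" by simp
  have "integrable M (X 0)"
    using fourth by (intro integrable_if_square square_integrable_if_fourth) (simp add: fourth_integrable_def)
  then have "expectation (\<lambda>\<omega>. X 0 \<omega> - \<mu>) = 0"
    by (simp add: \<mu>_def pop_mean_def prob_space)
  then have mean: "expectation (\<lambda>\<omega>. X i \<omega> - \<mu>) = 0" for i
    using same[of "\<lambda>x. x - \<mu>" i] by simp
  show ?thesis
  proof unfold_locales
    show "indep_vars (\<lambda>_. borel) (\<lambda>i \<omega>. X i \<omega> - \<mu>) UNIV"
      by (rule indep_vars_compose2[OF indep]) auto
    show "integrable M (\<lambda>\<omega>. (X i \<omega> - \<mu>) ^ 4)" for i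
      using same[of "\<lambda>x. (x - \<mu>) ^ 4" i] centered by (simp add: fourth_integrable_def)
    show "expectation (\<lambda>\<omega>. (X i \<omega> - \<mu>)\<^sup>2) = pop_var M (X 0)" for i
      using same[of "\<lambda>x. (x - \<mu>)\<^sup>2" i] by (simp add: pop_var_def \<mu>_def)
    show "expectation (\<lambda>\<omega>. (X i \<omega> - \<mu>) ^ 4) = expectation (\<lambda>\<omega>. (X 0 \<omega> - \<mu>) ^ 4)" for i
      using same[of "\<lambda>x. (x - \<mu>) ^ 4" i] by simp
  qed (fact mean)
qed

lemma (in prob_space) prob_sample_var_deviation_le:
  fixes X :: "nat \<Rightarrow> 'a \<Rightarrow> real"
  defines "\<sigma>2 \<equiv> pop_var M (X 0)"
  assumes indep: "indep_vars (\<lambda>_. borel) X UNIV"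
    and ident: "\<And>i. distr M borel (X i) = distr M borel (X 0)"
    and fourth: "integrable M (\<lambda>\<omega>. X 0 \<omega> ^ 4)"
    and "3 \<le> n" and pos: "0 < \<sigma>2" and "0 < u"
  shows "{\<omega> \<in> space M. sqrt (u / n) * \<sigma>2 \<le> \<bar>sample_var (\<lambda>i. X i \<omega>) n - \<sigma>2\<bar>} \<in> events"
    and "prob {\<omega> \<in> space M. sqrt (u / n) * \<sigma>2 \<le> \<bar>sample_var (\<lambda>i. X i \<omega>) n - \<sigma>2\<bar>}
           \<le> kurt M (X 0) / u"
proof -
  define \<mu> where "\<mu> = pop_mean M (X 0)"
  define \<mu>4 where "\<mu>4 = expectation (\<lambda>\<omega>. (X 0 \<omega> - \<mu>) ^ 4)"
  have [measurable]: "X i \<in> borel_measurable M" for i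
    using indep by (auto simp: indep_vars_def)
  interpret centered_indep_seq M "\<lambda>i \<omega>. X i \<omega> - \<mu>" \<sigma>2 \<mu>4
    unfolding \<mu>_def \<mu>4_def \<sigma>2_def by (rule centered_indep_seq_iid[OF indep ident fourth])
  show "{\<omega> \<in> space M. sqrt (u / n) * \<sigma>2 \<le> \<bar>sample_var (\<lambda>i. X i \<omega>) n - \<sigma>2\<bar>} \<in> events"
    by measurable
  have shift: "sample_var (\<lambda>i. X i \<omega>) n = sample_var (\<lambda>i. X i \<omega> - \<mu>) n" for \<omega>
    using sample_var_add_const[of "\<lambda>i. X i \<omega> - \<mu>" \<mu> n] by simp
  have "0 < sqrt (u / n) * \<sigma>2" using assms by simp
  then have "prob {\<omega> \<in> space M. sqrt (u / n) * \<sigma>2 \<le> \<bar>sample_var (\<lambda>i. X i \<omega>) n - \<sigma>2\<bar>}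
      \<le> expectation (\<lambda>\<omega>. (sample_var (\<lambda>i. X i \<omega> - \<mu>) n - \<sigma>2)\<^sup>2) / (sqrt (u / n) * \<sigma>2)\<^sup>2"
    unfolding shift using sample_var_mse(1)[of n] assms by (intro second_moment_method) simp_all
  also have "\<dots> \<le> \<mu>4 / n / (sqrt (u / n) * \<sigma>2)\<^sup>2"
    using sample_var_mse_le[of n] assms by (intro divide_right_mono) simp_all
  also have "\<dots> = \<mu>4 / (u * \<sigma>2\<^sup>2)"
    using assms by (simp add: power_mult_distrib field_simps)
  also have "\<dots> = kurt M (X 0) / u"
  proof -
    have "pop_sd M (X 0) ^ 4 = (sqrt \<sigma>2 ^ 2)\<^sup>2"
      by (simp add: pop_sd_def \<sigma>2_def flip: power_mult)
    also have "\<dots> = \<sigma>2\<^sup>2"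
      using pos by simp
    finally have "pop_sd M (X 0) ^ 4 = \<sigma>2\<^sup>2" .
    then show ?thesis by (simp add: kurt_def \<mu>4_def \<mu>_def \<sigma>2_def)
  qed
  finally show "prob {\<omega> \<in> space M. sqrt (u / n) * \<sigma>2 \<le> \<bar>sample_var (\<lambda>i. X i \<omega>) n - \<sigma>2\<bar>}
      \<le> kurt M (X 0) / u" .
qed

lemma (in prob_space) prob_avoid_all_ge:
  fixes p :: real
  assumes "finite I" "\<And>i. i \<in> I \<Longrightarrow> A i \<in> events" "\<And>i. i \<in> I \<Longrightarrow> prob (A i) \<le> p"
  shows "1 - card I * p \<le> prob (space M - (\<Union>i\<in>I. A i))"
proof -
  have "prob (\<Union>i\<in>I. A i) \<le> (\<Sum>i\<in>I. prob (A i))"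
    using assms by (intro finite_measure_subadditive_finite) auto
  also have "\<dots> \<le> card I * p"
    using assms sum_mono[of I "\<lambda>i. prob (A i)" "\<lambda>_. p"] by simp
  finally have "prob (\<Union>i\<in>I. A i) \<le> card I * p" .
  moreover have "(\<Union>i\<in>I. A i) \<in> events"
    using assms by (intro sets.finite_UN) auto
  ultimately show ?thesis
    using prob_compl[of "\<Union>i\<in>I. A i"] by linarith
qed

lemma (in prob_space) sample_vars_accurate_whp:
  fixes X1 X0 :: "nat \<Rightarrow> 'a \<Rightarrow> real" and N :: "nat \<Rightarrow> nat"
  assumes iid1: "indep_vars (\<lambda>_. borel) X1 UNIV" "\<And>i. distr M borel (X1 i) = distr M borel (X1 0)"
    and iid0: "indep_vars (\<lambda>_. borel) X0 UNIV" "\<And>i. distr M borel (X0 i) = distr M borel (X0 0)"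
    and fourth: "integrable M (\<lambda>\<omega>. X1 0 \<omega> ^ 4)" "integrable M (\<lambda>\<omega>. X0 0 \<omega> ^ 4)"
    and pos: "0 < pop_var M (X1 0)" "0 < pop_var M (X0 0)"
    and I: "finite I" "\<And>m. m \<in> I \<Longrightarrow> 3 \<le> N m" and "0 < u"
  shows "\<exists>E \<in> events. 1 - card I * ((kurt M (X1 0) + kurt M (X0 0)) / u) \<le> prob E \<and>
    (\<forall>\<omega> \<in> E. \<forall>m \<in> I. sample_var_accurate (\<lambda>i. X1 i \<omega>) (pop_var M (X1 0)) u (N m) \<and>
      sample_var_accurate (\<lambda>i. X0 i \<omega>) (pop_var M (X0 0)) u (N m))"
proof -
  define bad where "bad X m = {\<omega> \<in> space M.
    sqrt (u / N m) * pop_var M (X 0) \<le> \<bar>sample_var (\<lambda>i. X i \<omega>) (N m) - pop_var M (X 0)\<bar>}"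
    for X :: "nat \<Rightarrow> 'a \<Rightarrow> real" and m
  note dev1 = prob_sample_var_deviation_le[OF iid1 fourth(1) I(2) pos(1) \<open>0 < u\<close>, folded bad_def]
  note dev0 = prob_sample_var_deviation_le[OF iid0 fourth(2) I(2) pos(2) \<open>0 < u\<close>, folded bad_def]
  have "prob (bad X1 m \<union> bad X0 m) \<le> (kurt M (X1 0) + kurt M (X0 0)) / u" if "m \<in> I" for m
    using measure_Un_le[OF dev1(1) dev0(1), OF that that] dev1(2)[OF that] dev0(2)[OF that]
    by (simp add: add_divide_distrib)
  then have "1 - card I * ((kurt M (X1 0) + kurt M (X0 0)) / u)
      \<le> prob (space M - (\<Union>m\<in>I. bad X1 m \<union> bad X0 m))"
    using dev1(1) dev0(1) I(1) by (intro prob_avoid_all_ge) auto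
  moreover have "space M - (\<Union>m\<in>I. bad X1 m \<union> bad X0 m) \<in> events"
    using dev1(1) dev0(1) I(1) by (intro sets.Diff sets.finite_UN) auto
  ultimately show ?thesis
    by (intro bexI[of _ "space M - (\<Union>m\<in>I. bad X1 m \<union> bad X0 m)"]) (auto simp: bad_def not_le sample_var_accurate_def)
qed

theorem theorem3:
  fixes P :: "'a measure"
    and Y1 Y0 :: "nat \<Rightarrow> 'a \<Rightarrow> real"
    and M T :: nat
    and \<epsilon> :: real
  assumes "prob_space P"
    and "M \<ge> 3" and "T \<ge> 16"
    and "0 < \<epsilon>" and "\<epsilon> \<le> min (1 / real M) (1 / 100)"
    and iid1: "prob_space.indep_vars P (\<lambda>_. borel) Y1 UNIV" "\<And>i. distr P borel (Y1 i) = distr P borel (Y1 0)"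
    and iid0: "prob_space.indep_vars P (\<lambda>_. borel) Y0 UNIV" "\<And>i. distr P borel (Y0 i) = distr P borel (Y0 0)"
    and fourth1: "integrable P (\<lambda>x. (Y1 0 x) ^ 4)"
    and fourth0: "integrable P (\<lambda>x. (Y0 0 x) ^ 4)"
    and pos1: "pop_var P (Y1 0) > 0"
    and pos0: "pop_var P (Y0 0) > 0"
  shows "(1 < stage_end M T 1
          \<and> (\<forall>m. 1 \<le> m \<and> m + 1 \<le> M - 1 \<longrightarrow> stage_end M T m < stage_end M T (m + 1))
          \<and> stage_end M T (M - 1) < real T)
       \<and> (\<exists>E \<in> sets P.
            measure P E \<ge> 1 - real (M - 1) * (kurt P (Y1 0) + kurt P (Y0 0)) * real T powr (- \<epsilon>)
          \<and> (\<forall>\<omega> \<in> E.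
               (let (t1, t0) = adaptive_alloc M T (\<lambda>i. Y1 i \<omega>) (\<lambda>i. Y0 i \<omega>);
                    s1 = pop_sd P (Y1 0); s0 = pop_sd P (Y0 0)
                in proxyV s1 s0 t1 t0 / neymanV s1 s0 (real T)
                   \<le> 1 + 4 * 15 powr (- (1 / real M)) * real T powr (- ((real M - 1) / real M) + \<epsilon>))))"
proof -
  interpret P: prob_space P by fact
  define u where "u = real T powr \<epsilon>"
  have u: "1 \<le> u" "u \<le> 27/25 * stage_ratio M T"
    unfolding u_def using assms
    by (simp add: ge_one_powr_ge_zero, intro powr_le_stage_ratio) auto
  have N: "3 \<le> n_obs (half_end M T m)" if "m \<in> {1..M - 1}" for m
    using three_le_n_obs_half_end assms that by auto
  obtain E where E: "E \<in> sets P"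
      "1 - real (card {1..M - 1}) * ((kurt P (Y1 0) + kurt P (Y0 0)) / u) \<le> measure P E"
    and accurate: "\<forall>\<omega> \<in> E. \<forall>m \<in> {1..M - 1}.
      sample_var_accurate (\<lambda>i. Y1 i \<omega>) (pop_var P (Y1 0)) u (n_obs (half_end M T m)) \<and>
      sample_var_accurate (\<lambda>i. Y0 i \<omega>) (pop_var P (Y0 0)) u (n_obs (half_end M T m))"
    using P.sample_vars_accurate_whp[where I = "{1..M - 1}" and N = "\<lambda>m. n_obs (half_end M T m)"
        and u = u, OF iid1 iid0 fourth1 fourth0 pos1 pos0 _ N] u by auto
  have "accurate_estimates M T u (pop_sd P (Y1 0)) (pop_sd P (Y0 0)) (\<lambda>i. Y1 i \<omega>) (\<lambda>i. Y0 i \<omega>)"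
    if "\<omega> \<in> E" for \<omega>
    using assms u accurate that by unfold_locales (auto simp: pop_sd_def)
  then have "\<forall>\<omega> \<in> E. let (t1, t0) = adaptive_alloc M T (\<lambda>i. Y1 i \<omega>) (\<lambda>i. Y0 i \<omega>);
      s1 = pop_sd P (Y1 0); s0 = pop_sd P (Y0 0)
    in proxyV s1 s0 t1 t0 / neymanV s1 s0 (real T)
       \<le> 1 + 4 * 15 powr (- (1 / real M)) * real T powr (- ((real M - 1) / real M) + \<epsilon>)"
    unfolding u_def Let_def case_prod_beta using adaptive_alloc_ratio_le_powr by blast
  moreover have "(kurt P (Y1 0) + kurt P (Y0 0)) / u = (kurt P (Y1 0) + kurt P (Y0 0)) * real T powr (- \<epsilon>)"
    by (simp add: u_def powr_minus divide_inverse)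
  ultimately show ?thesis
    using stage_ends_feasible[OF assms(2,3)] E by (auto simp: mult.assoc)
qed

end
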